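(* Let $\Omega\subset\mathbb{R}^n$ be a bounded domain and let $u:\overline{\Omega}\times[0,T]\to\mathbb{R}$ be a smooth solution of $$\frac{\partial u}{\partial t}=F(D^2u),$$ where $F$ is a $C^2$ function defined on the cone of positive definite symmetric $n\times n$ matrices which is monotone increasing ($F(A+B)\ge F(A)$ whenever $B$ is positive definite) and such that $F^*(A)=-F(A^{-1})$ is concave on this cone. Let $\varepsilon>0$. If $D^2u\ge\varepsilon I$ everywhere on $\Omega$ at $t=0$ and on $\partial\Omega$ for $0\le t\le T$, then $D^2u\ge\varepsilon I$ everywhere on $\Omega$ for $0\le t\le T$.
   Context: $D^2u$ is the spatial Hessian of $u$; matrix inequalities are in the sense of quadratic forms. *)

theory Defs
  imports "HOL-Analysis.Analysis"
begin

text \<open>C^k regularity on a set U (intended for open U), defined by iterated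
  Frechet derivatives: C^0 = continuous; C^(k+1) = differentiable with every
  directional derivative of class C^k.\<close>
fun Ck_on :: "nat \<Rightarrow> ('a::real_normed_vector \<Rightarrow> real) \<Rightarrow> 'a set \<Rightarrow> bool" where
  "Ck_on 0 f U = continuous_on U f"
| "Ck_on (Suc k) f U = (f differentiable_on U \<and>
      (\<forall>v. Ck_on k (\<lambda>x. frechet_derivative f (at x) v) U))"

definition smooth_on :: "('a::real_normed_vector \<Rightarrow> real) \<Rightarrow> 'a set \<Rightarrow> bool" where
  "smooth_on f U = (\<forall>k. Ck_on k f U)"

definition posdef :: "real^'n^'n \<Rightarrow> bool" where
  "posdef A = (transpose A = A \<and> (\<forall>x. x \<noteq> 0 \<longrightarrow> x \<bullet> (A *v x) > 0))"

definition mat_ge :: "real^'n^'n \<Rightarrow> real^'n^'n \<Rightarrow> bool" where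
  "mat_ge A B = (\<forall>x. x \<bullet> (A *v x) \<ge> x \<bullet> (B *v x))"

definition sym_part :: "real^'n^'n \<Rightarrow> real^'n^'n" where
  "sym_part A = (1/2) *\<^sub>R (A + transpose A)"

definition hess :: "(real^'n \<Rightarrow> real \<Rightarrow> real) \<Rightarrow> real^'n \<Rightarrow> real \<Rightarrow> real^'n^'n" where
  "hess u x t = (\<chi> i j. frechet_derivative
      (\<lambda>y. frechet_derivative (\<lambda>z. u z t) (at y) (axis j 1)) (at x) (axis i 1))"

definition time_deriv :: "(real^'n \<Rightarrow> real \<Rightarrow> real) \<Rightarrow> real^'n \<Rightarrow> real \<Rightarrow> real" where
  "time_deriv u x t = deriv (\<lambda>s. u x s) t"

end

theory Submission
  imports Defs
begin

(*
  A >= eps I holds iff 2 v.e - v.A v <= |e|^2/eps for all v and e, the supremum over v being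
  e.A^-1 e.  So it suffices to bound Psi(x, t, v) = 2 v.e - v.D^2u(x, t) v - delta t by |e|^2/eps
  for every delta > 0 and let delta -> 0.  Psi attains its maximum over the cylinder times a
  ball (D^2u is uniformly positive definite there, so Psi is coercive in v), and on the parabolic
  boundary the bound is the hypothesis.  An interior maximum is impossible: there
  d/dt u_vv <= -delta, whereas differentiating the equation twice in the direction v gives
  d/dt u_vv = DF[D_vv D^2u] + D^2F[xi, xi] with xi = D_v D^2u.  The second-order condition in
  (x, v) gives D_vv D^2u >= 2 xi (D^2u)^-1 xi, monotonicity of F makes DF nonnegative on
  positive semidefinite matrices, and concavity of F*(A) = -F(A^-1) says exactly that
  D^2F[xi, xi] + 2 DF[xi A^-1 xi] >= 0; hence d/dt u_vv >= 0.
*)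

section \<open>Directional derivatives\<close>

definition dir_deriv :: "'a::real_normed_vector \<Rightarrow> ('a \<Rightarrow> real) \<Rightarrow> 'a \<Rightarrow> real" where
  "dir_deriv v g = (\<lambda>p. frechet_derivative g (at p) v)"

fun dir_derivs :: "'a::real_normed_vector list \<Rightarrow> ('a \<Rightarrow> real) \<Rightarrow> 'a \<Rightarrow> real" where
  "dir_derivs [] g = g"
| "dir_derivs (v # vs) g = dir_deriv v (dir_derivs vs g)"

lemma dir_derivs_append: "dir_derivs (vs @ ws) g = dir_derivs vs (dir_derivs ws g)"
  by (induction vs) auto

lemma Ck_on_Suc_dir_deriv: "Ck_on (Suc k) g S \<Longrightarrow> Ck_on k (dir_deriv v g) S"
  by (simp add: dir_deriv_def)

lemma Ck_on_Suc_has_derivative: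
  assumes "Ck_on (Suc k) g S" "open S" "p \<in> S"
  shows "(g has_derivative (\<lambda>v. dir_deriv v g p)) (at p)"
proof -
  have "g differentiable (at p)"
    using assms by (simp add: differentiable_on_eq_differentiable_at)
  then show ?thesis
    unfolding dir_deriv_def by (rule frechet_derivative_works[THEN iffD1])
qed

lemma Ck_on_Suc_linear_dir_deriv:
  assumes "Ck_on (Suc k) g S" "open S" "p \<in> S"
  shows "linear (\<lambda>v. dir_deriv v g p)"
  using Ck_on_Suc_has_derivative[OF assms] has_derivative_linear by blast

lemma smooth_on_imp_Ck_on: "smooth_on g U \<Longrightarrow> Ck_on k g U"
  by (simp add: smooth_on_def)

lemma smooth_on_dir_deriv: "smooth_on g U \<Longrightarrow> smooth_on (dir_deriv v g) U"
  unfolding smooth_on_def by (metis Ck_on_Suc_dir_deriv)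

lemma smooth_on_dir_derivs: "smooth_on g U \<Longrightarrow> smooth_on (dir_derivs vs g) U"
  by (induction vs) (auto simp: smooth_on_dir_deriv)

lemma dir_deriv_chain:
  assumes "Ck_on (Suc k) g S" "open S" "\<gamma> s \<in> S" "(\<gamma> has_vector_derivative \<gamma>') (at s)"
  shows "((\<lambda>s. g (\<gamma> s)) has_real_derivative dir_deriv \<gamma>' g (\<gamma> s)) (at s)"
proof -
  have "((\<lambda>s. g (\<gamma> s)) has_derivative (\<lambda>h. dir_deriv (h *\<^sub>R \<gamma>') g (\<gamma> s))) (at s)"
    using has_derivative_compose[OF assms(4)[unfolded has_vector_derivative_def]
        Ck_on_Suc_has_derivative[OF assms(1-3)]]
    by (simp add: o_def)
  moreover have "(\<lambda>h. dir_deriv (h *\<^sub>R \<gamma>') g (\<gamma> s)) = (\<lambda>h. dir_deriv \<gamma>' g (\<gamma> s) * h)"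
    using linear_scale[OF Ck_on_Suc_linear_dir_deriv[OF assms(1-3)]] by (auto simp: mult.commute)
  ultimately show ?thesis by (simp add: has_field_derivative_def)
qed

lemma dir_deriv_line:
  assumes "Ck_on (Suc k) g S" "open S" "p + s *\<^sub>R a \<in> S"
  shows "((\<lambda>r. g (p + r *\<^sub>R a)) has_real_derivative dir_deriv a g (p + s *\<^sub>R a)) (at s)"
proof (rule dir_deriv_chain[where \<gamma> = "\<lambda>r. p + r *\<^sub>R a", OF assms])
  show "((\<lambda>r. p + r *\<^sub>R a) has_vector_derivative a) (at s)"
    by (auto intro!: derivative_eq_intros)
qed

lemma dir_derivs_line:
  assumes "smooth_on g U" "open U" "p + s *\<^sub>R a \<in> U"
  shows "((\<lambda>s. dir_derivs vs g (p + s *\<^sub>R a)) has_real_derivative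
           dir_derivs (a # vs) g (p + s *\<^sub>R a)) (at s)"
  using dir_deriv_line[OF smooth_on_imp_Ck_on[OF smooth_on_dir_derivs[OF assms(1)]] assms(2,3)]
  by simp

lemma dir_deriv_cong:
  assumes "open U" "p \<in> U" "\<And>q. q \<in> U \<Longrightarrow> g1 q = g2 q"
  shows "dir_deriv v g1 p = dir_deriv v g2 p"
proof -
  have "(g1 has_derivative D) (at p) \<longleftrightarrow> (g2 has_derivative D) (at p)" for D
    using has_derivative_transform_within_open[OF _ assms(1,2)] assms(3) by metis
  then show ?thesis by (simp add: dir_deriv_def frechet_derivative_def)
qed

lemma Ck_on_2_iff:
  "Ck_on 2 g U \<longleftrightarrow> g differentiable_on U \<and>
     (\<forall>a. dir_deriv a g differentiable_on U \<and> (\<forall>b. continuous_on U (dir_deriv b (dir_deriv a g))))"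
  by (simp add: numeral_2_eq_2 dir_deriv_def)

lemma dist_add_right_self: "dist p (p + x) = norm x"
  using dist_add_cancel[of p 0 x] by simp

lemma open_contains_short_line:
  fixes x v :: "'a::real_normed_vector"
  assumes "open S" "x \<in> S"
  obtains d where "d > 0" "\<And>s. \<bar>s\<bar> < d \<Longrightarrow> x + s *\<^sub>R v \<in> S"
proof -
  obtain r where r: "r > 0" "ball x r \<subseteq> S" using assms open_contains_ball by blast
  have nv: "norm v + 1 > 0" by (simp add: add_nonneg_pos)
  show ?thesis
  proof (rule that[of "r / (norm v + 1)"])
    show "r / (norm v + 1) > 0" using r nv by simp
    fix s assume s: "\<bar>s\<bar> < r / (norm v + 1)"
    have "\<bar>s\<bar> * norm v \<le> \<bar>s\<bar> * (norm v + 1)" by (simp add: mult_left_mono)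
    also have "\<dots> < r" using s nv by (simp add: field_simps)
    finally show "x + s *\<^sub>R v \<in> S" using r(2) by (auto simp: dist_add_right_self)
  qed
qed

lemma second_difference_mvt:
  assumes g: "Ck_on 2 g U" and U: "open U" and ball: "ball p r \<subseteq> U"
    and h: "0 < h" "h * (norm a + norm b) < r"
  obtains \<sigma> \<rho> where "0 < \<sigma>" "\<sigma> < h" "0 < \<rho>" "\<rho> < h"
    "g (p + h *\<^sub>R a + h *\<^sub>R b) - g (p + h *\<^sub>R a) - g (p + h *\<^sub>R b) + g p
       = h * h * dir_deriv b (dir_deriv a g) (p + \<sigma> *\<^sub>R a + \<rho> *\<^sub>R b)"
proof -
  have g1: "Ck_on (Suc 1) g U" and g2: "Ck_on (Suc 0) (dir_deriv a g) U"
    using g by (auto simp: numeral_2_eq_2 dir_deriv_def)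
  have mem: "p + s *\<^sub>R a + t *\<^sub>R b \<in> U" if "0 \<le> s" "s \<le> h" "0 \<le> t" "t \<le> h" for s t
  proof -
    have "norm (s *\<^sub>R a + t *\<^sub>R b) \<le> s * norm a + t * norm b"
      using norm_triangle_ineq[of "s *\<^sub>R a" "t *\<^sub>R b"] that by simp
    also have "\<dots> \<le> h * norm a + h * norm b"
      using that by (intro add_mono mult_right_mono) auto
    also have "\<dots> < r" using h by (simp add: algebra_simps)
    finally have "dist p (p + s *\<^sub>R a + t *\<^sub>R b) < r"
      by (simp add: dist_add_right_self add.assoc)
    then show ?thesis using ball by auto
  qed
  define \<phi> where "\<phi> s = g ((p + h *\<^sub>R b) + s *\<^sub>R a) - g (p + s *\<^sub>R a)" for s
  have d\<phi>: "DERIV \<phi> s :> dir_deriv a g ((p + h *\<^sub>R b) + s *\<^sub>R a) - dir_deriv a g (p + s *\<^sub>R a)"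
    if "0 \<le> s" "s \<le> h" for s
    unfolding \<phi>_def using mem[of s h] mem[of s 0] that h
    by (intro DERIV_diff dir_deriv_line[OF g1 U]) (auto simp: algebra_simps)
  obtain \<sigma> where \<sigma>: "0 < \<sigma>" "\<sigma> < h"
    "\<phi> h - \<phi> 0 = h * (dir_deriv a g ((p + h *\<^sub>R b) + \<sigma> *\<^sub>R a) - dir_deriv a g (p + \<sigma> *\<^sub>R a))"
    using MVT2[OF h(1), of \<phi>, OF d\<phi>] by auto
  define \<psi> where "\<psi> t = dir_deriv a g ((p + \<sigma> *\<^sub>R a) + t *\<^sub>R b)" for t
  have d\<psi>: "DERIV \<psi> t :> dir_deriv b (dir_deriv a g) ((p + \<sigma> *\<^sub>R a) + t *\<^sub>R b)"
    if "0 \<le> t" "t \<le> h" for t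
    unfolding \<psi>_def using mem[of \<sigma> t] that \<sigma> by (intro dir_deriv_line[OF g2 U]) simp
  obtain \<rho> where \<rho>: "0 < \<rho>" "\<rho> < h"
    "\<psi> h - \<psi> 0 = h * dir_deriv b (dir_deriv a g) ((p + \<sigma> *\<^sub>R a) + \<rho> *\<^sub>R b)"
    using MVT2[OF h(1), of \<psi>, OF d\<psi>] by auto
  have "g (p + h *\<^sub>R a + h *\<^sub>R b) - g (p + h *\<^sub>R a) - g (p + h *\<^sub>R b) + g p = \<phi> h - \<phi> 0"
    unfolding \<phi>_def by (simp add: algebra_simps)
  also have "\<dots> = h * (\<psi> h - \<psi> 0)"
    using \<sigma>(3) unfolding \<psi>_def by (simp add: algebra_simps)
  finally show ?thesis using that \<sigma>(1,2) \<rho> by (simp add: add.assoc)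
qed

text \<open>Schwarz's theorem: both mixed second derivatives are the limit of the same second
  difference quotient, read in the two orders.\<close>
lemma dir_deriv_commute:
  assumes g: "Ck_on 2 g U" and U: "open U" and p: "p \<in> U"
  shows "dir_deriv a (dir_deriv b g) p = dir_deriv b (dir_deriv a g) p"
proof (rule ccontr)
  define X1 where "X1 = dir_deriv b (dir_deriv a g)"
  define X2 where "X2 = dir_deriv a (dir_deriv b g)"
  assume "dir_deriv a (dir_deriv b g) p \<noteq> dir_deriv b (dir_deriv a g) p"
  then have e: "\<bar>X1 p - X2 p\<bar> / 2 > 0" by (simp add: X1_def X2_def)
  have "continuous_on U X1" "continuous_on U X2"
    using g by (simp_all add: Ck_on_2_iff X1_def X2_def)
  then have "isCont X1 p" "isCont X2 p"
    using U p continuous_on_eq_continuous_at by blast+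
  then obtain d1 d2 where d: "d1 > 0" "d2 > 0"
    and d1: "\<forall>q. dist q p < d1 \<longrightarrow> dist (X1 q) (X1 p) < \<bar>X1 p - X2 p\<bar> / 2"
    and d2: "\<forall>q. dist q p < d2 \<longrightarrow> dist (X2 q) (X2 p) < \<bar>X1 p - X2 p\<bar> / 2"
    using e unfolding continuous_at_eps_delta by blast
  obtain r where r: "r > 0" "ball p r \<subseteq> U" using U p open_contains_ball by blast
  define R where "R = min r (min d1 d2)"
  have R: "R > 0" "ball p R \<subseteq> U" using r d by (auto simp: R_def)
  define X where "X = norm a + norm b + 1"
  have X: "X > 0" by (simp add: X_def add_nonneg_pos)
  define h where "h = R / (2 * X)"
  have h0: "h > 0" using R X by (simp add: h_def)
  have "h * (norm a + norm b) \<le> h * X" using h0 by (simp add: X_def)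
  also have "\<dots> < R" using R X by (simp add: h_def)
  finally have h: "h > 0" "h * (norm a + norm b) < R" "h * (norm b + norm a) < R"
    using h0 by (simp_all add: add.commute)
  have close: "dist (p + s *\<^sub>R x + t *\<^sub>R y) p < R"
    if "0 < s" "s < h" "0 < t" "t < h" "h * (norm x + norm y) < R" for s t x y
  proof -
    have "norm (s *\<^sub>R x + t *\<^sub>R y) \<le> s * norm x + t * norm y"
      using norm_triangle_ineq[of "s *\<^sub>R x" "t *\<^sub>R y"] that by simp
    also have "\<dots> \<le> h * norm x + h * norm y"
      using that by (intro add_mono mult_right_mono) auto
    also have "\<dots> < R" using that(5) by (simp add: algebra_simps)
    finally show ?thesis by (simp add: dist_add_right_self dist_commute add.assoc)
  qed
  obtain \<sigma> \<rho> where s1: "0 < \<sigma>" "\<sigma> < h" "0 < \<rho>" "\<rho> < h"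
    "g (p + h *\<^sub>R a + h *\<^sub>R b) - g (p + h *\<^sub>R a) - g (p + h *\<^sub>R b) + g p
       = h * h * X1 (p + \<sigma> *\<^sub>R a + \<rho> *\<^sub>R b)"
    using second_difference_mvt[OF g U R(2) h(1,2)] unfolding X1_def by blast
  obtain \<sigma>' \<rho>' where s2: "0 < \<sigma>'" "\<sigma>' < h" "0 < \<rho>'" "\<rho>' < h"
    "g (p + h *\<^sub>R b + h *\<^sub>R a) - g (p + h *\<^sub>R b) - g (p + h *\<^sub>R a) + g p
       = h * h * X2 (p + \<sigma>' *\<^sub>R b + \<rho>' *\<^sub>R a)"
    using second_difference_mvt[OF g U R(2) h(1,3)] unfolding X2_def by blast
  have "X1 (p + \<sigma> *\<^sub>R a + \<rho> *\<^sub>R b) = X2 (p + \<sigma>' *\<^sub>R b + \<rho>' *\<^sub>R a)"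
    using s1(5) s2(5) h(1) by (simp add: algebra_simps)
  moreover have "dist (X1 (p + \<sigma> *\<^sub>R a + \<rho> *\<^sub>R b)) (X1 p) < \<bar>X1 p - X2 p\<bar> / 2"
    using d1 close[OF s1(1-4) h(2)] by (simp add: R_def)
  moreover have "dist (X2 (p + \<sigma>' *\<^sub>R b + \<rho>' *\<^sub>R a)) (X2 p) < \<bar>X1 p - X2 p\<bar> / 2"
    using d2 close[OF s2(1-4) h(3)] by (simp add: R_def)
  ultimately show False by (auto simp: dist_real_def abs_if split: if_splits)
qed

lemma dir_derivs_move_front:
  assumes g: "smooth_on g U" and U: "open U" and p: "p \<in> U"
  shows "dir_derivs (pre @ a # post) g p = dir_derivs (a # pre @ post) g p"
  using p
proof (induction pre arbitrary: p)
  case (Cons b pre)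
  have "dir_derivs ((b # pre) @ a # post) g p = dir_deriv b (dir_derivs (a # pre @ post) g) p"
    using dir_deriv_cong[OF U Cons.prems Cons.IH] by simp
  also have "\<dots> = dir_derivs (a # (b # pre) @ post) g p"
    using dir_deriv_commute[OF smooth_on_imp_Ck_on[OF smooth_on_dir_derivs[OF g]] U Cons.prems]
    by simp
  finally show ?case .
qed simp

lemma dir_derivs_perm:
  assumes g: "smooth_on g U" and U: "open U" and p: "p \<in> U" and perm: "mset vs = mset ws"
  shows "dir_derivs vs g p = dir_derivs ws g p"
  using perm p
proof (induction vs arbitrary: ws p)
  case (Cons a vs)
  then obtain pre post where ws: "ws = pre @ a # post"
    by (metis list.set_intros(1) set_mset_mset split_list)
  then have "mset vs = mset (pre @ post)" using Cons.prems(1) by simp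
  then have "dir_derivs (a # vs) g p = dir_derivs (a # pre @ post) g p"
    using dir_deriv_cong[OF U Cons.prems(2) Cons.IH] by simp
  also have "\<dots> = dir_derivs ws g p"
    using dir_derivs_move_front[OF g U Cons.prems(2)] ws by simp
  finally show ?case .
qed simp

lemma linear_dir_derivs_Cons:
  assumes "smooth_on g U" "open U" "p \<in> U"
  shows "linear (\<lambda>v. dir_derivs (v # vs) g p)"
  using Ck_on_Suc_linear_dir_deriv[OF smooth_on_imp_Ck_on[OF smooth_on_dir_derivs[OF assms(1)]]
      assms(2,3)]
  by simp

section \<open>Derivatives in space and time\<close>

definition space_dir :: "real^'n \<Rightarrow> (real^'n) \<times> real" where
  "space_dir w = (w, 0)"

definition time_dir :: "(real^'n) \<times> real" where
  "time_dir = (0, 1)"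

definition space_hessian :: "((real^'n) \<times> real \<Rightarrow> real) \<Rightarrow> (real^'n) \<times> real \<Rightarrow> real^'n^'n" where
  "space_hessian g p = (\<chi> i j. dir_derivs [space_dir (axis i 1), space_dir (axis j 1)] g p)"

lemma linear_space_dir: "linear space_dir"
  by (rule linearI) (simp_all add: space_dir_def)

lemma time_dir_line: "(x, 0) + t *\<^sub>R time_dir = (x, t)"
  by (simp add: time_dir_def)

lemma dir_derivs_space_dir_expansion:
  assumes "smooth_on g U" "open U" "p \<in> U"
  shows "dir_derivs (space_dir v # vs) g p
           = (\<Sum>i\<in>UNIV. v $ i * dir_derivs (space_dir (axis i 1) # vs) g p)"
proof -
  have L: "linear (\<lambda>v. dir_derivs (space_dir v # vs) g p)"
    using linear_compose[OF linear_space_dir linear_dir_derivs_Cons[OF assms]]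
    by (simp add: o_def)
  have "v = (\<Sum>i\<in>UNIV. v $ i *\<^sub>R axis i 1)"
    using basis_expansion[of v] by (simp add: scalar_mult_eq_scaleR)
  then have "dir_derivs (space_dir v # vs) g p
      = dir_derivs (space_dir (\<Sum>i\<in>UNIV. v $ i *\<^sub>R axis i 1) # vs) g p"
    by simp
  also have "\<dots> = (\<Sum>i\<in>UNIV. dir_derivs (space_dir (v $ i *\<^sub>R axis i 1) # vs) g p)"
    by (rule linear_sum[OF L])
  also have "\<dots> = (\<Sum>i\<in>UNIV. v $ i * dir_derivs (space_dir (axis i 1) # vs) g p)"
    using linear_scale[OF L] by simp
  finally show ?thesis .
qed

lemma dir_derivs_space_dir_swap:
  assumes "smooth_on g U" "open U" "p \<in> U"
  shows "dir_derivs [space_dir v, space_dir w] g p = dir_derivs [space_dir w, space_dir v] g p"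
  by (rule dir_derivs_perm[OF assms]) (simp add: add_mset_commute)

lemma space_hessian_symmetric:
  assumes "smooth_on g U" "open U" "p \<in> U"
  shows "transpose (space_hessian g p) = space_hessian g p"
  using dir_derivs_space_dir_swap[OF assms]
  by (simp add: space_hessian_def transpose_def vec_eq_iff)

lemma inner_space_hessian:
  assumes g: "smooth_on g U" and U: "open U" and p: "p \<in> U"
  shows "v \<bullet> (space_hessian g p *v w) = dir_derivs [space_dir v, space_dir w] g p"
proof -
  have "(space_hessian g p *v w) $ i = dir_derivs [space_dir (axis i 1), space_dir w] g p" for i
  proof -
    have "(space_hessian g p *v w) $ i
        = (\<Sum>j\<in>UNIV. w $ j * dir_derivs [space_dir (axis j 1), space_dir (axis i 1)] g p)"
      using dir_derivs_space_dir_swap[OF g U p, of "axis i 1"]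
      by (simp add: space_hessian_def matrix_vector_mult_def mult.commute)
    also have "\<dots> = dir_derivs [space_dir w, space_dir (axis i 1)] g p"
      by (rule dir_derivs_space_dir_expansion[OF g U p, symmetric])
    finally show ?thesis using dir_derivs_space_dir_swap[OF g U p] by simp
  qed
  then show ?thesis
    using dir_derivs_space_dir_expansion[OF g U p, of v "[space_dir w]"]
    by (simp add: inner_vec_def)
qed

lemma quadratic_form_space_hessian_line:
  assumes g: "smooth_on g U" and U: "open U" and p: "p \<in> U"
  shows "(v + s *\<^sub>R z) \<bullet> (space_hessian g p *v (v + s *\<^sub>R z))
    = dir_derivs [space_dir v, space_dir v] g p + 2 * s * dir_derivs [space_dir v, space_dir z] g p
      + s\<^sup>2 * dir_derivs [space_dir z, space_dir z] g p"
proof -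
  have "(v + s *\<^sub>R z) \<bullet> (space_hessian g p *v (v + s *\<^sub>R z))
      = v \<bullet> (space_hessian g p *v v) + s * (v \<bullet> (space_hessian g p *v z))
        + s * (z \<bullet> (space_hessian g p *v v)) + s\<^sup>2 * (z \<bullet> (space_hessian g p *v z))"
    by (simp add: matrix_vector_right_distrib matrix_vector_mult_scaleR inner_add_left
        inner_add_right algebra_simps power2_eq_square)
  then show ?thesis
    using dir_derivs_space_dir_swap[OF g U p, of z v] by (simp add: inner_space_hessian[OF g U p])
qed

lemma continuous_on_space_hessian:
  assumes "smooth_on g U"
  shows "continuous_on U (\<lambda>p. space_hessian g p $ i $ j)"
  using smooth_on_imp_Ck_on[OF smooth_on_dir_derivs[OF assms], of 0
      "[space_dir (axis i 1), space_dir (axis j 1)]"]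
  by (simp add: space_hessian_def)

lemma frechet_derivative_slice:
  assumes g: "smooth_on g U" and U: "open U" and p: "(y, t) \<in> U"
  shows "frechet_derivative (\<lambda>z. g (z, t)) (at y) w = dir_deriv (space_dir w) g (y, t)"
proof -
  have "((\<lambda>z. (z, t)) has_derivative space_dir) (at y)"
    unfolding space_dir_def by (auto intro!: derivative_eq_intros)
  from has_derivative_compose[OF this
      Ck_on_Suc_has_derivative[OF smooth_on_imp_Ck_on[OF g] U p]]
  have "((\<lambda>z. g (z, t)) has_derivative (\<lambda>w. dir_deriv (space_dir w) g (y, t))) (at y)"
    by (simp add: o_def)
  then show ?thesis by (metis frechet_derivative_at)
qed

lemma hess_eq_space_hessian:
  fixes u :: "real^'n \<Rightarrow> real \<Rightarrow> real"
  assumes u: "smooth_on (\<lambda>(x, t). u x t) U" and U: "open U" and p: "(x, t) \<in> U"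
  shows "hess u x t = space_hessian (\<lambda>(x, t). u x t) (x, t)"
proof -
  have U_t: "open {y. (y, t) \<in> U}"
    using open_vimage[OF U, of "\<lambda>y. (y, t)"] by (simp add: vimage_def continuous_on_Pair)
  have "frechet_derivative (\<lambda>y. frechet_derivative (\<lambda>z. u z t) (at y) w) (at x) v
      = dir_derivs [space_dir v, space_dir w] (\<lambda>(x, t). u x t) (x, t)" for v w
  proof -
    have "frechet_derivative (\<lambda>y. frechet_derivative (\<lambda>z. u z t) (at y) w) (at x) v
        = dir_deriv v (\<lambda>y. dir_deriv (space_dir w) (\<lambda>(x, t). u x t) (y, t)) x"
      using dir_deriv_cong[OF U_t, of x "\<lambda>y. frechet_derivative (\<lambda>z. u z t) (at y) w"]
        frechet_derivative_slice[OF u U] p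
      by (simp add: dir_deriv_def)
    also have "\<dots> = dir_derivs [space_dir v, space_dir w] (\<lambda>(x, t). u x t) (x, t)"
      using frechet_derivative_slice[OF smooth_on_dir_deriv[OF u] U p]
      by (simp add: dir_deriv_def)
    finally show ?thesis .
  qed
  then show ?thesis by (simp add: hess_def space_hessian_def)
qed

lemma time_deriv_eq_dir_deriv:
  fixes u :: "real^'n \<Rightarrow> real \<Rightarrow> real"
  assumes u: "smooth_on (\<lambda>(x, t). u x t) U" and U: "open U" and p: "(x, t) \<in> U"
  shows "time_deriv u x t = dir_deriv time_dir (\<lambda>(x, t). u x t) (x, t)"
proof -
  have "((\<lambda>s. (x, s)) has_vector_derivative time_dir) (at t)"
    unfolding time_dir_def has_vector_derivative_def by (auto intro!: derivative_eq_intros)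
  from dir_deriv_chain[OF smooth_on_imp_Ck_on[OF u] U _ this] p
  show ?thesis unfolding time_deriv_def by (simp add: DERIV_imp_deriv)
qed

section \<open>Symmetric and positive definite matrices\<close>

lemma quadratic_form_expand: "x \<bullet> (M *v x) = (\<Sum>i\<in>UNIV. x $ i * (\<Sum>j\<in>UNIV. M $ i $ j * x $ j))"
  by (simp add: inner_vec_def matrix_vector_mult_def)

lemma continuous_on_quadratic_form:
  fixes M :: "'a::topological_space \<Rightarrow> real^'n^'n"
  assumes "\<And>i j. continuous_on K (\<lambda>p. M p $ i $ j)"
  shows "continuous_on (K \<times> V) (\<lambda>z. snd z \<bullet> (M (fst z) *v snd z))"
proof -
  have "continuous_on (K \<times> V) ((\<lambda>p. M p $ i $ j) \<circ> fst)" for i j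
    by (intro continuous_on_compose continuous_on_fst continuous_on_id
        continuous_on_subset[OF assms]) auto
  then have entries: "continuous_on (K \<times> V) (\<lambda>z. M (fst z) $ i $ j)" for i j
    by (simp add: o_def)
  show ?thesis
    unfolding quadratic_form_expand
    by (intro continuous_on_sum continuous_on_mult entries continuous_intros)
qed

lemma uniformly_coercive_on_compact:
  fixes M :: "'a::topological_space \<Rightarrow> real^'n^'n"
  assumes K: "compact K" and cont: "\<And>i j. continuous_on K (\<lambda>p. M p $ i $ j)"
    and pos: "\<And>p x. p \<in> K \<Longrightarrow> x \<noteq> 0 \<Longrightarrow> x \<bullet> (M p *v x) > 0"
  obtains c where "c > 0" "\<And>p x. p \<in> K \<Longrightarrow> c * (norm x)\<^sup>2 \<le> x \<bullet> (M p *v x)"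
proof (cases "K = {}")
  case True
  then show ?thesis using that[of 1] by auto
next
  case False
  define S where "S = K \<times> sphere (0::real^'n) 1"
  have "axis undefined 1 \<in> sphere (0::real^'n) 1" by simp
  then have "compact S" "S \<noteq> {}"
    using K False unfolding S_def by (auto intro: compact_Times)
  then obtain z0 where z0: "z0 \<in> S"
    and min: "\<And>z. z \<in> S \<Longrightarrow> snd z0 \<bullet> (M (fst z0) *v snd z0) \<le> snd z \<bullet> (M (fst z) *v snd z)"
    using continuous_attains_inf[OF _ _ continuous_on_quadratic_form[OF cont]]
    unfolding S_def by metis
  define c where "c = snd z0 \<bullet> (M (fst z0) *v snd z0)"
  have "fst z0 \<in> K" "snd z0 \<noteq> 0" using z0 by (auto simp: S_def)
  then have "c > 0" using pos by (simp add: c_def)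
  moreover have "c * (norm x)\<^sup>2 \<le> x \<bullet> (M p *v x)" if p: "p \<in> K" for p x
  proof (cases "x = 0")
    case False
    define y where "y = (1 / norm x) *\<^sub>R x"
    have "c \<le> y \<bullet> (M p *v y)" using min[of "(p, y)"] False p by (simp add: S_def y_def c_def)
    also have "y \<bullet> (M p *v y) = (x \<bullet> (M p *v x)) / (norm x)\<^sup>2"
      by (simp add: y_def matrix_vector_mult_scaleR power2_eq_square)
    finally show ?thesis using False by (simp add: field_simps)
  qed simp
  ultimately show ?thesis using that by blast
qed

lemma posdef_coercive:
  assumes "posdef M"
  obtains c where "c > 0" "\<And>x. c * (norm x)\<^sup>2 \<le> x \<bullet> (M *v x)"
proof -
  obtain c where "c > 0" "\<And>p x. p \<in> {0::real} \<Longrightarrow> c * (norm x)\<^sup>2 \<le> x \<bullet> (M *v x)"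
    by (rule uniformly_coercive_on_compact[of "{0::real}" "\<lambda>_. M"])
      (use assms in \<open>auto simp: posdef_def\<close>)
  then show ?thesis using that by blast
qed

lemma matrix_diff_ldistrib: "(A::real^'n^'m) ** (B - C) = A ** B - A ** C"
  by (vector matrix_matrix_mult_def sum_subtractf right_diff_distrib)

lemma matrix_diff_rdistrib: "((B::real^'n^'m) - C) ** A = B ** A - C ** A"
  by (vector matrix_matrix_mult_def sum_subtractf left_diff_distrib)

lemma matrix_neg_mult: "(- (X::real^'n^'m)) ** Y = - (X ** Y)"
  by (vector matrix_matrix_mult_def sum_negf)

lemma matrix_mult_neg: "(X::real^'n^'m) ** (- Y) = - (X ** Y)"
  by (vector matrix_matrix_mult_def sum_negf)

lemma matrix_vector_mult_uminus: "(M::real^'n^'m) *v (- x) = - (M *v x)"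
  by (simp add: matrix_vector_mult_def vec_eq_iff sum_negf)

lemma transpose_add: "transpose (A + B) = transpose A + transpose (B::real^'n^'m)"
  by (simp add: transpose_def vec_eq_iff)

lemma transpose_diff: "transpose (A - B) = transpose A - transpose (B::real^'n^'m)"
  by (simp add: transpose_def vec_eq_iff)

lemma transpose_uminus: "transpose (- A) = - transpose (A::real^'n^'m)"
  by (simp add: transpose_def vec_eq_iff)

lemma inner_scaleR_mat_1: "x \<bullet> ((c *\<^sub>R mat 1) *v x) = c * (x \<bullet> (x::real^'n))"
  by (simp add: scaleR_matrix_vector_assoc[symmetric])

lemma quadratic_form_symmetric_sandwich:
  fixes \<xi> B :: "real^'n^'n"
  assumes "transpose \<xi> = \<xi>"
  shows "w \<bullet> ((\<xi> ** B ** \<xi>) *v w) = (\<xi> *v w) \<bullet> (B *v (\<xi> *v w))"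
  using assms
  by (metis dot_lmul_matrix matrix_vector_mul_assoc transpose_transpose vector_transpose_matrix)

lemma posdef_matrix_inv:
  fixes M :: "real^'n^'n"
  assumes "posdef M"
  shows "M ** matrix_inv M = mat 1" "matrix_inv M ** M = mat 1"
proof -
  have "inj ((*v) M)"
  proof (rule injI)
    fix x y assume "M *v x = M *v y"
    then have "(x - y) \<bullet> (M *v (x - y)) = 0" by (simp add: matrix_vector_mult_diff_distrib)
    then have "x - y = 0" using assms unfolding posdef_def by (metis less_irrefl)
    then show "x = y" by simp
  qed
  then obtain B where "B ** M = mat 1" using matrix_left_invertible_injective by blast
  then have "invertible M"
    using matrix_left_right_inverse unfolding invertible_def by blast
  then have "M ** matrix_inv M = mat 1 \<and> matrix_inv M ** M = mat 1"
    unfolding invertible_def matrix_inv_def by (rule someI_ex)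
  then show "M ** matrix_inv M = mat 1" "matrix_inv M ** M = mat 1" by auto
qed

lemma symmetric_inverse:
  fixes M B :: "real^'n^'n"
  assumes "M ** B = mat 1" "B ** M = mat 1" "transpose M = M"
  shows "transpose B = B"
proof -
  have "transpose B ** M = mat 1"
    by (metis assms(1,3) matrix_transpose_mul transpose_mat)
  then have "transpose B = B"
    using assms(1) by (metis matrix_mul_assoc matrix_mul_lid matrix_mul_rid)
  then show ?thesis .
qed

lemma posdef_inverse:
  fixes M B :: "real^'n^'n"
  assumes "posdef M" "M ** B = mat 1" "B ** M = mat 1"
  shows "posdef B"
  unfolding posdef_def
proof (intro conjI allI impI)
  show "transpose B = B" using assms by (auto simp: posdef_def intro: symmetric_inverse)
  fix x :: "real^'n" assume x: "x \<noteq> 0"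
  have "M *v (B *v x) = x" using assms(2) by (simp add: matrix_vector_mul_assoc)
  moreover have "B *v x \<noteq> 0" using calculation x by auto
  ultimately show "x \<bullet> (B *v x) > 0"
    using assms(1) unfolding posdef_def by (metis inner_commute)
qed

lemma matrix_inv_unique:
  fixes A B :: "real^'n^'n"
  assumes "A ** B = mat 1" "B ** A = mat 1"
  shows "matrix_inv B = A"
proof -
  have "invertible B" using assms unfolding invertible_def by blast
  then have "matrix_inv B ** B = mat 1"
    unfolding invertible_def matrix_inv_def by (rule someI2_ex) blast
  then have "matrix_inv B = matrix_inv B ** (B ** A)" using assms(2) by simp
  also have "\<dots> = A" using \<open>matrix_inv B ** B = mat 1\<close> by (simp add: matrix_mul_assoc)
  finally show ?thesis .
qed

lemma matrix_inverse_difference: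
  fixes C C' \<Gamma> \<Gamma>' :: "real^'n^'n"
  assumes "C ** \<Gamma> = mat 1" "\<Gamma>' ** C' = mat 1"
  shows "\<Gamma>' - \<Gamma> = \<Gamma>' ** (C - C') ** \<Gamma>"
proof -
  have "\<Gamma>' ** C ** \<Gamma> = \<Gamma>'" using assms(1) by (simp add: matrix_mul_assoc[symmetric])
  moreover have "\<Gamma>' ** C' ** \<Gamma> = \<Gamma>" using assms(2) by simp
  ultimately show ?thesis by (simp add: matrix_diff_ldistrib matrix_diff_rdistrib)
qed

lemma norm_inverse_mult_le:
  fixes M B :: "real^'n^'n"
  assumes "M ** B = mat 1" "c > 0" "\<And>x. c * (norm x)\<^sup>2 \<le> x \<bullet> (M *v x)"
  shows "norm (B *v z) \<le> norm z / c"
proof -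
  define y where "y = B *v z"
  have "M *v y = z" unfolding y_def using assms(1) by (simp add: matrix_vector_mul_assoc)
  then have "c * (norm y)\<^sup>2 \<le> norm y * norm z"
    using assms(3)[of y] norm_cauchy_schwarz[of y z] by simp
  then have "c * norm y \<le> norm z"
    by (cases "norm y = 0") (auto simp: power2_eq_square)
  then show ?thesis using assms(2) by (simp add: y_def field_simps)
qed

lemma norm_matrix_vector_le_entry_sum:
  "norm ((N::real^'n^'m) *v x) \<le> (\<Sum>i\<in>UNIV. \<Sum>j\<in>UNIV. \<bar>N $ i $ j\<bar>) * norm x"
proof -
  have "norm (N *v x) \<le> onorm ((*v) N) * norm x"
    by (rule onorm[OF matrix_vector_mul_bounded_linear])
  also have "\<dots> \<le> (\<Sum>i\<in>UNIV. \<Sum>j\<in>UNIV. \<bar>N $ i $ j\<bar>) * norm x"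
    by (intro mult_right_mono onorm_le_matrix_component_sum) auto
  finally show ?thesis .
qed

lemma abs_quadratic_form_le:
  "\<bar>x \<bullet> ((N::real^'n^'n) *v x)\<bar> \<le> (\<Sum>i\<in>UNIV. \<Sum>j\<in>UNIV. \<bar>N $ i $ j\<bar>) * (norm x)\<^sup>2"
proof -
  have "\<bar>x \<bullet> (N *v x)\<bar> \<le> norm x * norm (N *v x)" by (rule Cauchy_Schwarz_ineq2)
  also have "\<dots> \<le> norm x * ((\<Sum>i\<in>UNIV. \<Sum>j\<in>UNIV. \<bar>N $ i $ j\<bar>) * norm x)"
    by (intro mult_left_mono norm_matrix_vector_le_entry_sum) simp
  finally show ?thesis by (simp add: power2_eq_square algebra_simps)
qed

lemma sym_part_symmetric: "transpose (sym_part X) = sym_part X"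
  by (simp add: sym_part_def transpose_def vec_eq_iff add.commute)

lemma sym_part_id: "transpose X = X \<Longrightarrow> sym_part X = X"
  by (simp add: sym_part_def scaleR_2[symmetric])

lemma quadratic_form_sym_part: "x \<bullet> (sym_part X *v x) = x \<bullet> ((X::real^'n^'n) *v x)"
proof -
  have "x \<bullet> (sym_part X *v x) = (1/2) * (x \<bullet> (X *v x) + x \<bullet> (transpose X *v x))"
    by (simp add: sym_part_def scaleR_matrix_vector_assoc[symmetric]
        matrix_vector_mult_add_rdistrib inner_add_right)
  then show ?thesis using dot_lmul_matrix[of x X x] by (simp add: inner_commute)
qed

lemma open_posdef_sym_part: "open {A::real^'n^'n. posdef (sym_part A)}"
  unfolding open_contains_ball
proof
  fix A :: "real^'n^'n" assume "A \<in> {A. posdef (sym_part A)}"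
  then obtain c where c: "c > 0" "\<And>x. c * (norm x)\<^sup>2 \<le> x \<bullet> (sym_part A *v x)"
    using posdef_coercive by blast
  then have c: "c > 0" "\<And>x. c * (norm x)\<^sup>2 \<le> x \<bullet> (A *v x)"
    by (simp_all add: quadratic_form_sym_part)
  define m where "m = real CARD('n) * real CARD('n)"
  have m: "m \<ge> 0" by (simp add: m_def)
  define e where "e = c / (m + 1)"
  have e: "e > 0" using c m by (simp add: e_def add_nonneg_pos)
  have me: "m * e < c" using c m by (simp add: e_def field_simps)
  have "X \<in> {A. posdef (sym_part A)}" if X: "X \<in> ball A e" for X
  proof -
    define N where "N = X - A"
    have "(\<Sum>i\<in>UNIV. \<Sum>j\<in>UNIV. \<bar>N $ i $ j\<bar>) \<le> real CARD('n) * (real CARD('n) * norm N)"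
      by (intro sum_bounded_above order_trans[OF component_le_norm_cart Finite_Cartesian_Product.norm_nth_le])
    also have "\<dots> \<le> real CARD('n) * (real CARD('n) * e)"
      using X by (intro mult_left_mono) (auto simp: N_def dist_norm norm_minus_commute)
    also have "\<dots> < c" using me by (simp add: m_def mult.assoc)
    finally have N: "(\<Sum>i\<in>UNIV. \<Sum>j\<in>UNIV. \<bar>N $ i $ j\<bar>) < c" .
    have "x \<bullet> (sym_part X *v x) > 0" if x: "x \<noteq> 0" for x
    proof -
      have "x \<bullet> (sym_part X *v x) = x \<bullet> (A *v x) + x \<bullet> (N *v x)"
        by (simp add: quadratic_form_sym_part N_def matrix_vector_mult_diff_rdistrib inner_diff_right)
      moreover have "(\<Sum>i\<in>UNIV. \<Sum>j\<in>UNIV. \<bar>N $ i $ j\<bar>) * (norm x)\<^sup>2 < c * (norm x)\<^sup>2"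
        using N x by (intro mult_strict_right_mono) auto
      ultimately show ?thesis using c(2)[of x] abs_quadratic_form_le[of x N] by linarith
    qed
    then show ?thesis by (simp add: posdef_def sym_part_symmetric)
  qed
  then show "\<exists>e>0. ball A e \<subseteq> {A. posdef (sym_part A)}" using e by blast
qed

lemma mat_ge_scaled_identity_iff:
  "mat_ge A (\<epsilon> *\<^sub>R mat 1) \<longleftrightarrow> (\<forall>x. \<epsilon> * (norm x)\<^sup>2 \<le> x \<bullet> (A *v x))"
  unfolding mat_ge_def by (simp add: scaleR_matrix_vector_assoc[symmetric] power2_norm_eq_inner)

lemma legendre_bound:
  assumes "\<epsilon> > 0" "\<And>x. \<epsilon> * (norm x)\<^sup>2 \<le> x \<bullet> (A *v x)"
  shows "2 * (v \<bullet> e) - v \<bullet> (A *v v) \<le> (norm e)\<^sup>2 / \<epsilon>"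
proof -
  have "0 \<le> (norm (\<epsilon> *\<^sub>R v - e))\<^sup>2" by simp
  also have "\<dots> = (\<epsilon> *\<^sub>R v - e) \<bullet> (\<epsilon> *\<^sub>R v - e)" by (simp only: power2_norm_eq_inner)
  also have "\<dots> = \<epsilon> * (\<epsilon> * (v \<bullet> v)) - 2 * \<epsilon> * (v \<bullet> e) + e \<bullet> e"
    by (simp add: inner_diff_left inner_diff_right inner_commute algebra_simps)
  also have "\<dots> = \<epsilon> * (\<epsilon> * (norm v)\<^sup>2) - 2 * \<epsilon> * (v \<bullet> e) + (norm e)\<^sup>2"
    by (simp add: power2_norm_eq_inner)
  also have "\<dots> \<le> \<epsilon> * (v \<bullet> (A *v v)) - 2 * \<epsilon> * (v \<bullet> e) + (norm e)\<^sup>2"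
    using assms by (simp add: mult_left_mono)
  finally have "\<epsilon> * (2 * (v \<bullet> e) - v \<bullet> (A *v v)) \<le> (norm e)\<^sup>2" by (simp add: algebra_simps)
  then show ?thesis using assms(1) by (simp add: field_simps)
qed

section \<open>Matrix-valued curves\<close>

definition matrix_unit :: "'n::finite \<Rightarrow> 'm::finite \<Rightarrow> real^'m^'n" where
  "matrix_unit i j = axis i (axis j 1)"

lemma matrix_unit_expansion: "(H::real^'m^'n) = (\<Sum>i\<in>UNIV. \<Sum>j\<in>UNIV. H $ i $ j *\<^sub>R matrix_unit i j)"
proof -
  have unit: "matrix_unit i j $ k $ l = (if k = i then (if l = j then 1 else 0) else 0)" for i j k l
    by (simp add: matrix_unit_def axis_def)
  have "(\<Sum>i\<in>UNIV. \<Sum>j\<in>UNIV. H $ i $ j *\<^sub>R matrix_unit i j) $ k $ l = H $ k $ l" for k l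
  proof -
    have "(\<Sum>i\<in>UNIV. \<Sum>j\<in>UNIV. H $ i $ j *\<^sub>R matrix_unit i j) $ k $ l
        = (\<Sum>i\<in>UNIV. \<Sum>j\<in>UNIV. H $ i $ j * (if k = i then (if l = j then 1 else 0) else 0))"
      by (simp add: unit)
    also have "\<dots> = (\<Sum>i\<in>UNIV. if k = i then H $ i $ l else 0)"
      by (intro sum.cong refl) (simp add: if_distrib[of "\<lambda>x. _ * x"] sum.delta cong: if_cong)
    also have "\<dots> = H $ k $ l" by (simp add: sum.delta)
    finally show ?thesis .
  qed
  then show ?thesis by (simp add: vec_eq_iff)
qed

lemma has_vector_derivative_matrix_iff:
  "(X has_vector_derivative (X'::real^'m^'n)) (at r) \<longleftrightarrow>
     (\<forall>i j. ((\<lambda>s. X s $ i $ j) has_real_derivative X' $ i $ j) (at r))"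
proof
  assume X: "(X has_vector_derivative X') (at r)"
  show "\<forall>i j. ((\<lambda>s. X s $ i $ j) has_real_derivative X' $ i $ j) (at r)"
  proof (intro allI)
    fix i j
    have "bounded_linear (\<lambda>M::real^'m^'n. M $ i $ j)"
      using bounded_linear_compose[OF bounded_linear_vec_nth[of j] bounded_linear_vec_nth[of i]]
      by simp
    from bounded_linear.has_vector_derivative[OF this X]
    show "((\<lambda>s. X s $ i $ j) has_real_derivative X' $ i $ j) (at r)"
      by (simp add: has_real_derivative_iff_has_vector_derivative)
  qed
next
  assume entries: "\<forall>i j. ((\<lambda>s. X s $ i $ j) has_real_derivative X' $ i $ j) (at r)"
  have "((\<lambda>s. \<Sum>i\<in>UNIV. \<Sum>j\<in>UNIV. X s $ i $ j *\<^sub>R matrix_unit i j) has_derivative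
         (\<lambda>h. \<Sum>i\<in>UNIV. \<Sum>j\<in>UNIV. (X' $ i $ j * h) *\<^sub>R matrix_unit i j)) (at r)"
    using entries
    by (intro has_derivative_sum has_derivative_scaleR_left) (simp add: has_field_derivative_def)
  moreover have "(\<lambda>h. \<Sum>i\<in>UNIV. \<Sum>j\<in>UNIV. (X' $ i $ j * h) *\<^sub>R matrix_unit i j) = (\<lambda>h. h *\<^sub>R X')"
  proof
    fix h
    have "(\<Sum>i\<in>UNIV. \<Sum>j\<in>UNIV. (X' $ i $ j * h) *\<^sub>R matrix_unit i j)
        = h *\<^sub>R (\<Sum>i\<in>UNIV. \<Sum>j\<in>UNIV. X' $ i $ j *\<^sub>R matrix_unit i j)"
      by (simp add: scaleR_sum_right mult.commute)
    then show "(\<Sum>i\<in>UNIV. \<Sum>j\<in>UNIV. (X' $ i $ j * h) *\<^sub>R matrix_unit i j) = h *\<^sub>R X'"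
      using matrix_unit_expansion[of X'] by simp
  qed
  moreover have "(\<lambda>s. \<Sum>i\<in>UNIV. \<Sum>j\<in>UNIV. X s $ i $ j *\<^sub>R matrix_unit i j) = X"
    using matrix_unit_expansion by (rule ext[symmetric])
  ultimately show "(X has_vector_derivative X') (at r)" by (simp add: has_vector_derivative_def)
qed

lemma has_vector_derivative_matrix_mult:
  fixes X :: "real \<Rightarrow> real^'k^'n" and Y :: "real \<Rightarrow> real^'m^'k"
  assumes "(X has_vector_derivative X') (at r)" "(Y has_vector_derivative Y') (at r)"
  shows "((\<lambda>s. X s ** Y s) has_vector_derivative (X' ** Y r + X r ** Y')) (at r)"
  unfolding has_vector_derivative_matrix_iff
proof (intro allI)
  fix i j
  have "((\<lambda>s. \<Sum>k\<in>UNIV. X s $ i $ k * Y s $ k $ j) has_real_derivative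
      (\<Sum>k\<in>UNIV. X' $ i $ k * Y r $ k $ j + X r $ i $ k * Y' $ k $ j)) (at r)"
    using assms unfolding has_vector_derivative_matrix_iff
    by (intro DERIV_sum) (auto intro!: derivative_eq_intros simp: ac_simps)
  then show "((\<lambda>s. (X s ** Y s) $ i $ j) has_real_derivative (X' ** Y r + X r ** Y') $ i $ j) (at r)"
    by (simp add: matrix_matrix_mult_def sum.distrib)
qed

context
  fixes B \<eta> :: "real^'n^'n" and \<Gamma> :: "real \<Rightarrow> real^'n^'n" and d L :: real
  assumes inverse: "\<And>s. \<bar>s\<bar> < d \<Longrightarrow> (B + s *\<^sub>R \<eta>) ** \<Gamma> s = mat 1 \<and> \<Gamma> s ** (B + s *\<^sub>R \<eta>) = mat 1"
    and bounded: "\<And>s z. \<bar>s\<bar> < d \<Longrightarrow> norm (\<Gamma> s *v z) \<le> L * norm z"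
begin

lemma inverse_line_difference:
  assumes "\<bar>r\<bar> < d" "\<bar>y\<bar> < d"
  shows "\<Gamma> y - \<Gamma> r = (r - y) *\<^sub>R (\<Gamma> y ** \<eta> ** \<Gamma> r)"
  using matrix_inverse_difference[of "B + r *\<^sub>R \<eta>" "\<Gamma> r" "\<Gamma> y" "B + y *\<^sub>R \<eta>"] inverse assms
  by (simp add: algebra_simps matrix_scalar_ac scalar_matrix_assoc[symmetric] matrix_diff_ldistrib
      matrix_diff_rdistrib)

lemma inverse_line_continuous:
  assumes r: "\<bar>r\<bar> < d"
  shows "((\<lambda>y. \<Gamma> y $ i $ j) \<longlongrightarrow> \<Gamma> r $ i $ j) (at r)"
proof -
  define w where "w = \<eta> *v (\<Gamma> r *v axis j 1)"
  have "eventually (\<lambda>y. \<bar>y\<bar> < d) (at r)"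
    using eventually_at_in_open'[of "ball 0 d" r] r by simp
  then have "eventually (\<lambda>y. norm (\<Gamma> y $ i $ j - \<Gamma> r $ i $ j) \<le> \<bar>y - r\<bar> * (L * norm w)) (at r)"
  proof eventually_elim
    case (elim y)
    have "\<Gamma> y $ i $ j - \<Gamma> r $ i $ j = ((\<Gamma> y - \<Gamma> r) *v axis j 1) $ i"
      by (simp add: matrix_vector_mult_def axis_def if_distrib cong: if_cong)
    also have "\<dots> = (r - y) * (\<Gamma> y *v w) $ i"
      by (simp add: inverse_line_difference[OF r elim] w_def scaleR_matrix_vector_assoc[symmetric]
          matrix_vector_mul_assoc matrix_mul_assoc)
    finally have "norm (\<Gamma> y $ i $ j - \<Gamma> r $ i $ j) \<le> \<bar>y - r\<bar> * norm (\<Gamma> y *v w)"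
      using component_le_norm_cart[of "\<Gamma> y *v w" i]
      by (simp add: abs_mult abs_minus_commute mult_left_mono)
    also have "\<dots> \<le> \<bar>y - r\<bar> * (L * norm w)" by (intro mult_left_mono bounded elim) simp
    finally show ?case .
  qed
  moreover have "((\<lambda>y. \<bar>y - r\<bar> * (L * norm w)) \<longlongrightarrow> 0) (at r)"
    by (auto intro!: tendsto_eq_intros)
  ultimately have "((\<lambda>y. \<Gamma> y $ i $ j - \<Gamma> r $ i $ j) \<longlongrightarrow> 0) (at r)"
    by (rule Lim_null_comparison)
  then show ?thesis by (simp add: LIM_zero_iff)
qed

lemma inverse_line_has_vector_derivative:
  assumes r: "\<bar>r\<bar> < d"
  shows "(\<Gamma> has_vector_derivative - (\<Gamma> r ** \<eta> ** \<Gamma> r)) (at r)"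
  unfolding has_vector_derivative_matrix_iff has_field_derivative_iff
proof (intro allI)
  fix i j
  define M where "M = \<eta> ** \<Gamma> r"
  have "((\<lambda>y. (- (\<Gamma> y ** M)) $ i $ j) \<longlongrightarrow> (- (\<Gamma> r ** M)) $ i $ j) (at r)"
    unfolding matrix_matrix_mult_def
    by (simp, intro tendsto_intros inverse_line_continuous[OF r])
  then have "((\<lambda>y. (\<Gamma> y $ i $ j - \<Gamma> r $ i $ j) / (y - r)) \<longlongrightarrow> (- (\<Gamma> r ** M)) $ i $ j) (at r)"
  proof (rule Lim_transform_within_open[where s = "ball 0 d"])
    fix y assume "y \<in> ball 0 d" "y \<noteq> r"
    then have "\<Gamma> y $ i $ j - \<Gamma> r $ i $ j = - ((y - r) * (\<Gamma> y ** M) $ i $ j)" "y - r \<noteq> 0"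
      using inverse_line_difference[OF r, of y] unfolding M_def
      by (auto simp: vec_eq_iff matrix_mul_assoc algebra_simps)
    then show "(- (\<Gamma> y ** M)) $ i $ j = (\<Gamma> y $ i $ j - \<Gamma> r $ i $ j) / (y - r)"
      by simp
  qed (use r in auto)
  then show "((\<lambda>y. (\<Gamma> y $ i $ j - \<Gamma> r $ i $ j) / (y - r)) \<longlongrightarrow> (- (\<Gamma> r ** \<eta> ** \<Gamma> r)) $ i $ j) (at r)"
    by (simp add: M_def matrix_mul_assoc)
qed

end

lemma posdef_line_coercive:
  fixes B \<eta> :: "real^'n^'n"
  assumes B: "posdef B"
  obtains c d where "c > 0" "d > 0"
    "\<And>r x. \<bar>r\<bar> < d \<Longrightarrow> c * (norm x)\<^sup>2 \<le> x \<bullet> ((B + r *\<^sub>R \<eta>) *v x)"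
proof -
  obtain c where c: "c > 0" "\<And>x. c * (norm x)\<^sup>2 \<le> x \<bullet> (B *v x)"
    using posdef_coercive[OF B] by blast
  define K where "K = (\<Sum>i\<in>UNIV. \<Sum>j\<in>UNIV. \<bar>\<eta> $ i $ j\<bar>) + 1"
  have K: "K > 0" unfolding K_def by (simp add: add_nonneg_pos sum_nonneg)
  define d where "d = c / (2 * K)"
  have d: "d > 0" using c K by (simp add: d_def)
  have "(c / 2) * (norm x)\<^sup>2 \<le> x \<bullet> ((B + r *\<^sub>R \<eta>) *v x)" if r: "\<bar>r\<bar> < d" for r x
  proof -
    have "(\<Sum>i\<in>UNIV. \<Sum>j\<in>UNIV. \<bar>\<eta> $ i $ j\<bar>) * (norm x)\<^sup>2 \<le> K * (norm x)\<^sup>2"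
      by (intro mult_right_mono) (auto simp: K_def)
    then have "\<bar>x \<bullet> (\<eta> *v x)\<bar> \<le> K * (norm x)\<^sup>2"
      using abs_quadratic_form_le[of x \<eta>] by linarith
    then have "\<bar>r\<bar> * \<bar>x \<bullet> (\<eta> *v x)\<bar> \<le> d * (K * (norm x)\<^sup>2)"
      using r by (intro mult_mono') auto
    then have "\<bar>r * (x \<bullet> (\<eta> *v x))\<bar> \<le> d * (K * (norm x)\<^sup>2)" by (simp add: abs_mult)
    also have "\<dots> = (c / 2) * (norm x)\<^sup>2" using K by (simp add: d_def)
    finally have "- ((c / 2) * (norm x)\<^sup>2) \<le> r * (x \<bullet> (\<eta> *v x))" by linarith
    moreover have "x \<bullet> ((B + r *\<^sub>R \<eta>) *v x) = x \<bullet> (B *v x) + r * (x \<bullet> (\<eta> *v x))"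
      by (simp add: matrix_vector_mult_add_rdistrib scaleR_matrix_vector_assoc[symmetric]
          inner_add_right)
    ultimately show ?thesis using c(2)[of x] by linarith
  qed
  moreover have "c / 2 > 0" using c by simp
  ultimately show ?thesis using that d by blast
qed

lemma posdef_line_inverse:
  fixes B \<eta> :: "real^'n^'n"
  assumes B: "posdef B" and \<eta>: "transpose \<eta> = \<eta>"
  obtains d where "d > 0" "\<And>r. \<bar>r\<bar> < d \<Longrightarrow> posdef (B + r *\<^sub>R \<eta>)"
    "\<And>r. \<bar>r\<bar> < d \<Longrightarrow> ((\<lambda>s. matrix_inv (B + s *\<^sub>R \<eta>)) has_vector_derivative
        - (matrix_inv (B + r *\<^sub>R \<eta>) ** \<eta> ** matrix_inv (B + r *\<^sub>R \<eta>))) (at r)"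
proof -
  obtain c d where c: "c > 0" and d: "d > 0"
    and coercive: "\<And>r x. \<bar>r\<bar> < d \<Longrightarrow> c * (norm x)\<^sup>2 \<le> x \<bullet> ((B + r *\<^sub>R \<eta>) *v x)"
    using posdef_line_coercive[OF B] by blast
  have posdef: "posdef (B + r *\<^sub>R \<eta>)" if r: "\<bar>r\<bar> < d" for r
    unfolding posdef_def
  proof (intro conjI allI impI)
    show "transpose (B + r *\<^sub>R \<eta>) = B + r *\<^sub>R \<eta>"
      using B \<eta> by (simp add: posdef_def transpose_add transpose_scalar)
    fix x :: "real^'n" assume "x \<noteq> 0"
    then have "0 < c * (norm x)\<^sup>2" using c by simp
    then show "x \<bullet> ((B + r *\<^sub>R \<eta>) *v x) > 0" using coercive[OF r] by (rule less_le_trans)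
  qed
  have inverse: "(B + r *\<^sub>R \<eta>) ** matrix_inv (B + r *\<^sub>R \<eta>) = mat 1 \<and>
      matrix_inv (B + r *\<^sub>R \<eta>) ** (B + r *\<^sub>R \<eta>) = mat 1" if "\<bar>r\<bar> < d" for r
    using posdef_matrix_inv[OF posdef[OF that]] by blast
  have bounded: "norm (matrix_inv (B + r *\<^sub>R \<eta>) *v z) \<le> (1 / c) * norm z" if "\<bar>r\<bar> < d" for r z
    using norm_inverse_mult_le[OF conjunct1[OF inverse[OF that]] c coercive[OF that]] by simp
  show ?thesis
  proof (rule that[OF d posdef])
    fix r :: real assume r: "\<bar>r\<bar> < d"
    show "((\<lambda>s. matrix_inv (B + s *\<^sub>R \<eta>)) has_vector_derivative
        - (matrix_inv (B + r *\<^sub>R \<eta>) ** \<eta> ** matrix_inv (B + r *\<^sub>R \<eta>))) (at r)"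
      by (rule inverse_line_has_vector_derivative[where d = d and L = "1 / c"])
        (use inverse bounded r in auto)
  qed
qed

lemma space_hessian_line_has_vector_derivative:
  assumes g: "smooth_on g U" and U: "open U" and p: "p + s *\<^sub>R a \<in> U"
  shows "((\<lambda>s. space_hessian g (p + s *\<^sub>R a)) has_vector_derivative
           space_hessian (dir_derivs [a] g) (p + s *\<^sub>R a)) (at s)"
  unfolding has_vector_derivative_matrix_iff
proof (intro allI)
  fix i j
  have "dir_derivs [a, space_dir (axis i 1), space_dir (axis j 1)] g (p + s *\<^sub>R a)
      = dir_derivs [space_dir (axis i 1), space_dir (axis j 1), a] g (p + s *\<^sub>R a)"
    by (rule dir_derivs_perm[OF g U p]) (simp add: add_mset_commute)
  then show "((\<lambda>s. space_hessian g (p + s *\<^sub>R a) $ i $ j) has_real_derivative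
      space_hessian (dir_derivs [a] g) (p + s *\<^sub>R a) $ i $ j) (at s)"
    using dir_derivs_line[OF g U p, of "[space_dir (axis i 1), space_dir (axis j 1)]"]
      dir_derivs_append[of "[space_dir (axis i 1), space_dir (axis j 1)]" "[a]" g]
    by (simp add: space_hessian_def)
qed

lemma dir_deriv_matrix_expansion:
  fixes g :: "real^'m^'n \<Rightarrow> real"
  assumes "Ck_on (Suc k) g S" "open S" "X \<in> S"
  shows "dir_deriv H g X = (\<Sum>i\<in>UNIV. \<Sum>j\<in>UNIV. H $ i $ j * dir_deriv (matrix_unit i j) g X)"
proof -
  have lin: "linear (\<lambda>v. dir_deriv v g X)" by (rule Ck_on_Suc_linear_dir_deriv[OF assms])
  have "dir_deriv H g X = dir_deriv (\<Sum>i\<in>UNIV. \<Sum>j\<in>UNIV. H $ i $ j *\<^sub>R matrix_unit i j) g X"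
    using matrix_unit_expansion[of H] by simp
  also have "\<dots> = (\<Sum>i\<in>UNIV. \<Sum>j\<in>UNIV. H $ i $ j * dir_deriv (matrix_unit i j) g X)"
    by (simp add: linear_sum[OF lin] linear_scale[OF lin])
  finally show ?thesis .
qed

text \<open>Second-order chain rule \<open>(\<Phi> \<circ> \<gamma>)'' = D\<Phi>[\<gamma>''] + D\<^sup>2\<Phi>[\<gamma>', \<gamma>']\<close>; differentiating
  \<open>D\<Phi>\<close> entrywise gives \<open>D(\<partial>\<^sub>i\<^sub>j\<Phi>)[\<gamma>']\<close>, which Schwarz's theorem turns back into
  \<open>\<partial>\<^sub>i\<^sub>j(D\<Phi>[\<gamma>'])\<close>.\<close>
lemma DERIV_dir_deriv_along_curve:
  fixes \<Phi> :: "real^'m^'n \<Rightarrow> real"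
  assumes \<Phi>: "Ck_on 2 \<Phi> S" and S: "open S" and d: "d > 0"
    and in_S: "\<And>s. \<bar>s\<bar> < d \<Longrightarrow> \<gamma> s \<in> S"
    and \<gamma>: "\<And>s. \<bar>s\<bar> < d \<Longrightarrow> (\<gamma> has_vector_derivative \<gamma>' s) (at s)"
    and \<gamma>': "(\<gamma>' has_vector_derivative \<gamma>'') (at 0)"
  shows "((\<lambda>s. dir_deriv (\<gamma>' s) \<Phi> (\<gamma> s)) has_real_derivative
           dir_deriv \<gamma>'' \<Phi> (\<gamma> 0) + dir_deriv (\<gamma>' 0) (dir_deriv (\<gamma>' 0) \<Phi>) (\<gamma> 0)) (at 0)"
proof -
  have C2: "Ck_on (Suc (Suc 0)) \<Phi> S" using \<Phi> by (simp add: numeral_2_eq_2)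
  have C1: "Ck_on (Suc 0) (dir_deriv v \<Phi>) S" for v by (rule Ck_on_Suc_dir_deriv[OF C2])
  define X H where "X = \<gamma> 0" and "H = \<gamma>' 0"
  have X: "X \<in> S" and \<gamma>0: "(\<gamma> has_vector_derivative H) (at 0)"
    using in_S \<gamma> d by (simp_all add: X_def H_def)
  define G where "G s = (\<Sum>i\<in>UNIV. \<Sum>j\<in>UNIV. \<gamma>' s $ i $ j * dir_deriv (matrix_unit i j) \<Phi> (\<gamma> s))" for s
  have "(G has_real_derivative (\<Sum>i\<in>UNIV. \<Sum>j\<in>UNIV.
      \<gamma>'' $ i $ j * dir_deriv (matrix_unit i j) \<Phi> X
      + H $ i $ j * dir_deriv H (dir_deriv (matrix_unit i j) \<Phi>) X)) (at 0)"
    unfolding G_def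
  proof (intro DERIV_sum)
    fix i j
    have "((\<lambda>s. \<gamma>' s $ i $ j) has_real_derivative \<gamma>'' $ i $ j) (at 0)"
      using \<gamma>' by (simp add: has_vector_derivative_matrix_iff)
    from DERIV_mult[OF this dir_deriv_chain[OF C1[of "matrix_unit i j"] S X[unfolded X_def] \<gamma>0]]
    show "((\<lambda>s. \<gamma>' s $ i $ j * dir_deriv (matrix_unit i j) \<Phi> (\<gamma> s)) has_real_derivative
        \<gamma>'' $ i $ j * dir_deriv (matrix_unit i j) \<Phi> X
        + H $ i $ j * dir_deriv H (dir_deriv (matrix_unit i j) \<Phi>) X) (at 0)"
      by (simp add: X_def H_def ac_simps)
  qed
  also have "(\<Sum>i\<in>UNIV. \<Sum>j\<in>UNIV. \<gamma>'' $ i $ j * dir_deriv (matrix_unit i j) \<Phi> X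
      + H $ i $ j * dir_deriv H (dir_deriv (matrix_unit i j) \<Phi>) X) = dir_deriv \<gamma>'' \<Phi> X
      + (\<Sum>i\<in>UNIV. \<Sum>j\<in>UNIV. H $ i $ j * dir_deriv (matrix_unit i j) (dir_deriv H \<Phi>) X)"
    using dir_deriv_commute[OF \<Phi> S X, of H]
    by (simp add: sum.distrib dir_deriv_matrix_expansion[OF C2 S X, of \<gamma>''])
  also have "\<dots> = dir_deriv \<gamma>'' \<Phi> X + dir_deriv H (dir_deriv H \<Phi>) X"
    by (simp only: dir_deriv_matrix_expansion[OF C1 S X, of H H])
  finally have G: "(G has_real_derivative dir_deriv \<gamma>'' \<Phi> X + dir_deriv H (dir_deriv H \<Phi>) X) (at 0)" .
  show ?thesis unfolding X_def[symmetric] H_def[symmetric]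
  proof (rule has_field_derivative_transform_within_open[OF G, of "ball 0 d"])
    fix s :: real assume "s \<in> ball 0 d"
    then have "\<gamma> s \<in> S" using in_S by simp
    then show "G s = dir_deriv (\<gamma>' s) \<Phi> (\<gamma> s)"
      unfolding G_def by (simp only: dir_deriv_matrix_expansion[OF C2 S, of "\<gamma> s" "\<gamma>' s"])
  qed (use d in auto)
qed

section \<open>Real functions at an extremum\<close>

lemma DERIV_nonneg_at_left_max:
  fixes g :: "real \<Rightarrow> real"
  assumes "DERIV g t :> l" "d > 0" "\<And>h. 0 < h \<Longrightarrow> h < d \<Longrightarrow> g (t - h) \<le> g t"
  shows "0 \<le> l"
proof (rule ccontr)
  assume "\<not> 0 \<le> l"
  then obtain d' where "d' > 0" "\<And>h. 0 < h \<Longrightarrow> h < d' \<Longrightarrow> g t < g (t - h)"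
    using DERIV_neg_dec_left[OF assms(1)] by force
  then show False
    using assms(2) assms(3)[of "min d d' / 2"] by (smt (verit) field_sum_of_halves)
qed

lemma DERIV_nonneg_at_right_min:
  fixes g :: "real \<Rightarrow> real"
  assumes "DERIV g t :> l" "d > 0" "\<And>h. 0 < h \<Longrightarrow> h < d \<Longrightarrow> g t \<le> g (t + h)"
  shows "0 \<le> l"
proof (rule ccontr)
  assume "\<not> 0 \<le> l"
  then obtain d' where "d' > 0" "\<And>h. 0 < h \<Longrightarrow> h < d' \<Longrightarrow> g (t + h) < g t"
    using DERIV_neg_dec_right[OF assms(1)] by force
  then show False
    using assms(2) assms(3)[of "min d d' / 2"] by (smt (verit) field_sum_of_halves)
qed

lemma second_deriv_nonpos_at_local_max:
  fixes \<phi> :: "real \<Rightarrow> real"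
  assumes d: "d > 0" and \<phi>: "\<And>s. \<bar>s\<bar> < d \<Longrightarrow> DERIV \<phi> s :> \<phi>' s"
    and \<phi>': "DERIV \<phi>' 0 :> L" and max: "\<And>s. \<bar>s\<bar> < d \<Longrightarrow> \<phi> s \<le> \<phi> 0"
  shows "L \<le> 0"
proof (rule ccontr)
  assume "\<not> L \<le> 0"
  then obtain d' where d': "d' > 0" "\<And>h. 0 < h \<Longrightarrow> h < d' \<Longrightarrow> \<phi>' 0 < \<phi>' (0 + h)"
    using DERIV_pos_inc_right[OF \<phi>'] by force
  have "\<phi>' 0 = 0"
    using DERIV_local_max[OF \<phi>[of 0] d] d max by (simp add: abs_minus_commute)
  define h where "h = min d d' / 2"
  have h: "0 < h" "h < d" "h < d'" using d d'(1) by (auto simp: h_def)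
  obtain z where z: "0 < z" "z < h" "\<phi> h - \<phi> 0 = h * \<phi>' z"
    using MVT2[OF h(1), of \<phi> \<phi>'] \<phi> h by auto
  have "\<phi>' z > 0" using d'(2)[of z] z h \<open>\<phi>' 0 = 0\<close> by simp
  then have "h * \<phi>' z > 0" using h by simp
  with z(3) max[of h] h show False by simp
qed

lemma second_deriv_nonpos_if_midpoint_concave:
  fixes \<phi> :: "real \<Rightarrow> real"
  assumes d: "d > 0" and \<phi>: "\<And>s. \<bar>s\<bar> < d \<Longrightarrow> DERIV \<phi> s :> \<phi>' s"
    and \<phi>': "DERIV \<phi>' 0 :> L" and mid: "\<And>r. \<bar>r\<bar> < d \<Longrightarrow> \<phi> r + \<phi> (- r) \<le> 2 * \<phi> 0"
  shows "L \<le> 0"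
proof -
  define \<psi> where "\<psi> r = \<phi> r + \<phi> (- r) - 2 * \<phi> 0" for r
  have "DERIV \<psi> s :> \<phi>' s - \<phi>' (- s)" if "\<bar>s\<bar> < d" for s
  proof -
    have "DERIV \<phi> (- s) :> \<phi>' (- s)" using \<phi> that by simp
    from DERIV_chain2[OF this DERIV_minus[OF DERIV_ident]]
    have "DERIV (\<lambda>r. \<phi> (- r)) s :> \<phi>' (- s) * (- 1)" by simp
    then have "DERIV \<psi> s :> \<phi>' s + \<phi>' (- s) * (- 1) - 0"
      unfolding \<psi>_def using \<phi> that by (intro DERIV_diff DERIV_add DERIV_const) auto
    then show ?thesis by simp
  qed
  moreover have "DERIV (\<lambda>s. \<phi>' s - \<phi>' (- s)) 0 :> L + L"
  proof -
    have "DERIV (\<lambda>r. \<phi>' (- r)) 0 :> L * (- 1)"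
      using DERIV_chain2[OF _ DERIV_minus[OF DERIV_ident], of \<phi>' L 0] \<phi>' by simp
    then show ?thesis using DERIV_diff[OF \<phi>'] by fastforce
  qed
  moreover have "\<psi> s \<le> \<psi> 0" if "\<bar>s\<bar> < d" for s using mid[OF that] by (simp add: \<psi>_def)
  ultimately have "L + L \<le> 0" by (intro second_deriv_nonpos_at_local_max[OF d, of \<psi>]) auto
  then show ?thesis by simp
qed

section \<open>The structure conditions on F\<close>

lemma posdef_add_scaled_identity:
  fixes M :: "real^'n^'n"
  assumes "transpose M = M" "\<And>x. 0 \<le> x \<bullet> (M *v x)" "\<kappa> > 0"
  shows "posdef (M + \<kappa> *\<^sub>R mat 1)"
  unfolding posdef_def
proof (intro conjI allI impI)
  show "transpose (M + \<kappa> *\<^sub>R mat 1) = M + \<kappa> *\<^sub>R mat 1"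
    using assms(1) by (simp add: transpose_add transpose_scalar)
  fix x :: "real^'n" assume "x \<noteq> 0"
  then have "0 < \<kappa> * (x \<bullet> x)" using assms(3) by simp
  then show "0 < x \<bullet> ((M + \<kappa> *\<^sub>R mat 1) *v x)"
    using assms(2)[of x] by (simp add: matrix_vector_mult_add_rdistrib inner_add_right inner_scaleR_mat_1)
qed

lemma dir_deriv_posdef_nonneg_if_mono:
  fixes F :: "real^'n^'n \<Rightarrow> real"
  assumes \<Phi>: "Ck_on (Suc k) (\<lambda>X. F (sym_part X)) S" and S: "open S" and A: "A \<in> S" "posdef A"
    and mono: "\<forall>A B. posdef A \<and> posdef B \<longrightarrow> F (A + B) \<ge> F A" and P: "posdef P"
  shows "0 \<le> dir_deriv P (\<lambda>X. F (sym_part X)) A"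
proof (rule DERIV_nonneg_at_right_min[where d = 1])
  show "DERIV (\<lambda>h. F (sym_part (A + h *\<^sub>R P))) 0 :> dir_deriv P (\<lambda>X. F (sym_part X)) A"
    using dir_deriv_line[OF \<Phi> S, of A 0 P] A(1) by simp
  fix h :: real assume h: "0 < h" "h < 1"
  have "posdef (h *\<^sub>R P)"
    using P h by (simp add: posdef_def transpose_scalar scaleR_matrix_vector_assoc[symmetric])
  then have "F A \<le> F (A + h *\<^sub>R P)" using mono A(2) by blast
  moreover have "transpose (A + h *\<^sub>R P) = A + h *\<^sub>R P" "transpose A = A"
    using A(2) P by (simp_all add: posdef_def transpose_add transpose_scalar)
  ultimately show "F (sym_part (A + 0 *\<^sub>R P)) \<le> F (sym_part (A + (0 + h) *\<^sub>R P))"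
    by (simp add: sym_part_id)
qed simp

lemma dir_deriv_nonneg_if_mono:
  fixes F :: "real^'n^'n \<Rightarrow> real"
  assumes \<Phi>: "Ck_on (Suc k) (\<lambda>X. F (sym_part X)) S" and S: "open S" and A: "A \<in> S" "posdef A"
    and mono: "\<forall>A B. posdef A \<and> posdef B \<longrightarrow> F (A + B) \<ge> F A"
    and M: "transpose M = M" "\<And>x. 0 \<le> x \<bullet> (M *v x)"
  shows "0 \<le> dir_deriv M (\<lambda>X. F (sym_part X)) A"
proof -
  define \<Phi> where "\<Phi> = (\<lambda>X. F (sym_part X))"
  have lin: "linear (\<lambda>v. dir_deriv v \<Phi> A)"
    using Ck_on_Suc_linear_dir_deriv[OF \<Phi> S A(1)] by (simp add: \<Phi>_def)
  define b where "b = dir_deriv (mat 1) \<Phi> A"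
  have "0 \<le> dir_deriv M \<Phi> A + e" if e: "0 < e" for e
  proof -
    define \<kappa> where "\<kappa> = e / (\<bar>b\<bar> + 1)"
    have \<kappa>: "0 < \<kappa>" using e by (simp add: \<kappa>_def add_nonneg_pos)
    have "\<kappa> * b \<le> \<kappa> * (\<bar>b\<bar> + 1)" using \<kappa> by (intro mult_left_mono) auto
    also have "\<dots> = e" by (simp add: \<kappa>_def add_nonneg_pos)
    finally have \<kappa>b: "\<kappa> * b \<le> e" .
    have "0 \<le> dir_deriv (M + \<kappa> *\<^sub>R mat 1) \<Phi> A"
      unfolding \<Phi>_def
      by (rule dir_deriv_posdef_nonneg_if_mono[OF \<Phi> S A mono posdef_add_scaled_identity[OF M \<kappa>]])
    also have "\<dots> = dir_deriv M \<Phi> A + \<kappa> * b"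
      using linear_add[OF lin] linear_scale[OF lin] by (simp add: b_def)
    finally show ?thesis using \<kappa>b by linarith
  qed
  then show ?thesis unfolding \<Phi>_def by (rule field_le_epsilon) simp
qed

lemma inverse_line_through_posdef:
  fixes A \<xi> :: "real^'n^'n"
  defines "B \<equiv> matrix_inv A"
  assumes A: "posdef A" and \<xi>: "transpose \<xi> = \<xi>"
  obtains d \<gamma>' where "d > 0" "\<And>s. \<bar>s\<bar> < d \<Longrightarrow> posdef (B - s *\<^sub>R (B ** \<xi> ** B))"
    "\<And>s. \<bar>s\<bar> < d \<Longrightarrow>
       ((\<lambda>s. matrix_inv (B - s *\<^sub>R (B ** \<xi> ** B))) has_vector_derivative \<gamma>' s) (at s)"
    "\<gamma>' 0 = \<xi>" "(\<gamma>' has_vector_derivative 2 *\<^sub>R (\<xi> ** B ** \<xi>)) (at 0)"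
proof -
  have AB: "A ** B = mat 1" and BA: "B ** A = mat 1"
    using posdef_matrix_inv[OF A] by (simp_all add: B_def)
  have B: "posdef B" by (rule posdef_inverse[OF A AB BA])
  define \<eta> where "\<eta> = - (B ** \<xi> ** B)"
  have \<eta>: "transpose \<eta> = \<eta>"
    using B \<xi> by (simp add: \<eta>_def posdef_def transpose_uminus matrix_transpose_mul matrix_mul_assoc)
  have line_eq: "B - s *\<^sub>R (B ** \<xi> ** B) = B + s *\<^sub>R \<eta>" for s by (simp add: \<eta>_def)
  obtain d where d: "d > 0" and line: "\<And>r. \<bar>r\<bar> < d \<Longrightarrow> posdef (B + r *\<^sub>R \<eta>)"
    and deriv: "\<And>r. \<bar>r\<bar> < d \<Longrightarrow> ((\<lambda>s. matrix_inv (B + s *\<^sub>R \<eta>)) has_vector_derivative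
        - (matrix_inv (B + r *\<^sub>R \<eta>) ** \<eta> ** matrix_inv (B + r *\<^sub>R \<eta>))) (at r)"
    using posdef_line_inverse[OF B \<eta>] by blast
  define \<gamma> where "\<gamma> s = matrix_inv (B + s *\<^sub>R \<eta>)" for s
  define \<gamma>' where "\<gamma>' s = - (\<gamma> s ** \<eta> ** \<gamma> s)" for s
  have \<gamma>: "(\<gamma> has_vector_derivative \<gamma>' s) (at s)" if "\<bar>s\<bar> < d" for s
    using deriv[OF that] by (simp add: \<gamma>_def[abs_def] \<gamma>'_def)
  have \<gamma>0: "\<gamma> 0 = A" using matrix_inv_unique[OF AB BA] by (simp add: \<gamma>_def B_def)
  have \<gamma>'0: "\<gamma>' 0 = \<xi>"
  proof -
    have "A ** \<eta> ** A = - ((A ** B) ** \<xi> ** (B ** A))"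
      by (simp add: \<eta>_def matrix_mul_assoc matrix_neg_mult matrix_mult_neg)
    then show ?thesis using AB BA by (simp add: \<gamma>'_def \<gamma>0)
  qed
  have "(\<gamma>' has_vector_derivative - ((\<gamma>' 0 ** \<eta> + \<gamma> 0 ** 0) ** \<gamma> 0 + (\<gamma> 0 ** \<eta>) ** \<gamma>' 0)) (at 0)"
  proof -
    have "(\<gamma> has_vector_derivative - (\<gamma> 0 ** \<eta> ** \<gamma> 0)) (at 0)"
      using \<gamma>[of 0] d by (simp add: \<gamma>'_def)
    then show ?thesis
      unfolding \<gamma>'_def[abs_def]
      by (intro has_vector_derivative_minus has_vector_derivative_matrix_mult
          has_vector_derivative_const)
  qed
  also have "- ((\<gamma>' 0 ** \<eta> + \<gamma> 0 ** 0) ** \<gamma> 0 + (\<gamma> 0 ** \<eta>) ** \<gamma>' 0) = 2 *\<^sub>R (\<xi> ** B ** \<xi>)"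
  proof -
    have "\<xi> ** \<eta> ** A = - (\<xi> ** B ** \<xi> ** (B ** A))" "A ** \<eta> ** \<xi> = - ((A ** B) ** \<xi> ** B ** \<xi>)"
      by (simp_all add: \<eta>_def matrix_mul_assoc matrix_neg_mult matrix_mult_neg)
    then show ?thesis using AB BA by (simp add: \<gamma>0 \<gamma>'0 scaleR_2)
  qed
  finally show ?thesis
    using that[OF d, of \<gamma>'] line \<gamma> \<gamma>'0 unfolding line_eq \<gamma>_def[abs_def] by blast
qed

text \<open>Concavity of \<open>A \<mapsto> -F(A\<inverse>)\<close> along the line \<open>B - s B \<xi> B\<close> through \<open>B = A\<inverse>\<close>, whose inverse
  leaves \<open>A\<close> with velocity \<open>\<xi>\<close> and acceleration \<open>2 \<xi> B \<xi>\<close>.\<close>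
lemma second_dir_deriv_bound_if_inverse_concave:
  fixes F :: "real^'n^'n \<Rightarrow> real"
  assumes C2: "Ck_on 2 (\<lambda>X. F (sym_part X)) {X. posdef (sym_part X)}"
    and concave: "concave_on {A. posdef A} (\<lambda>A. - F (matrix_inv A))"
    and A: "posdef A" and \<xi>: "transpose \<xi> = \<xi>"
  shows "0 \<le> dir_deriv \<xi> (dir_deriv \<xi> (\<lambda>X. F (sym_part X))) A
              + 2 * dir_deriv (\<xi> ** matrix_inv A ** \<xi>) (\<lambda>X. F (sym_part X)) A"
proof -
  define \<Phi> where "\<Phi> = (\<lambda>X. F (sym_part X))"
  define S where "S = {X::real^'n^'n. posdef (sym_part X)}"
  have \<Phi>: "Ck_on 2 \<Phi> S" and S: "open S"
    using C2 open_posdef_sym_part by (simp_all add: \<Phi>_def S_def)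
  define B where "B = matrix_inv A"
  define C where "C s = B - s *\<^sub>R (B ** \<xi> ** B)" for s
  define \<gamma> where "\<gamma> s = matrix_inv (C s)" for s
  obtain d \<gamma>' where d: "d > 0" and C: "\<And>s. \<bar>s\<bar> < d \<Longrightarrow> posdef (C s)"
    and \<gamma>: "\<And>s. \<bar>s\<bar> < d \<Longrightarrow> (\<gamma> has_vector_derivative \<gamma>' s) (at s)"
    and \<gamma>'0: "\<gamma>' 0 = \<xi>" and \<gamma>': "(\<gamma>' has_vector_derivative 2 *\<^sub>R (\<xi> ** B ** \<xi>)) (at 0)"
    using inverse_line_through_posdef[OF A \<xi>] unfolding B_def C_def \<gamma>_def[abs_def] by blast
  have \<gamma>_posdef: "posdef (\<gamma> s)" if "\<bar>s\<bar> < d" for s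
    using posdef_inverse[OF C[OF that] posdef_matrix_inv[OF C[OF that]]] by (simp add: \<gamma>_def)
  have in_S: "\<gamma> s \<in> S" and \<Phi>_\<gamma>: "\<Phi> (\<gamma> s) = F (\<gamma> s)" if "\<bar>s\<bar> < d" for s
    using \<gamma>_posdef[OF that] by (simp_all add: S_def \<Phi>_def posdef_def sym_part_id)
  have \<gamma>0: "\<gamma> 0 = A"
    using matrix_inv_unique posdef_matrix_inv[OF A] by (simp add: \<gamma>_def C_def B_def)
  define \<phi> where "\<phi> s = - \<Phi> (\<gamma> s)" for s
  have "DERIV \<phi> s :> - dir_deriv (\<gamma>' s) \<Phi> (\<gamma> s)" if "\<bar>s\<bar> < d" for s
    unfolding \<phi>_def using \<Phi> S in_S[OF that] \<gamma>[OF that]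
    by (intro DERIV_minus dir_deriv_chain[where k = 1]) (simp_all add: numeral_2_eq_2)
  moreover have "DERIV (\<lambda>s. - dir_deriv (\<gamma>' s) \<Phi> (\<gamma> s)) 0 :>
      - (dir_deriv (2 *\<^sub>R (\<xi> ** B ** \<xi>)) \<Phi> (\<gamma> 0) + dir_deriv (\<gamma>' 0) (dir_deriv (\<gamma>' 0) \<Phi>) (\<gamma> 0))"
    by (intro DERIV_minus DERIV_dir_deriv_along_curve[OF \<Phi> S d in_S \<gamma> \<gamma>'])
  moreover have "\<phi> r + \<phi> (- r) \<le> 2 * \<phi> 0" if r: "\<bar>r\<bar> < d" for r
  proof -
    have "F (matrix_inv ((1 - 1/2) *\<^sub>R C r + (1/2) *\<^sub>R C (- r)))
        \<le> (1 - 1/2) * F (matrix_inv (C r)) + (1/2) * F (matrix_inv (C (- r)))"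
      using convex_onD[OF concave[unfolded concave_on_def], of "1/2"] C[of r] C[of "- r"] r
      by simp
    moreover have "(1 - 1/2) *\<^sub>R C r + (1/2) *\<^sub>R C (- r) = C 0"
      by (simp add: C_def algebra_simps scaleR_2[symmetric])
    ultimately show ?thesis
      using \<Phi>_\<gamma>[OF r] \<Phi>_\<gamma>[of "- r"] \<Phi>_\<gamma>[of 0] r d by (simp add: \<phi>_def \<gamma>_def)
  qed
  ultimately have "- (dir_deriv (2 *\<^sub>R (\<xi> ** B ** \<xi>)) \<Phi> (\<gamma> 0)
      + dir_deriv (\<gamma>' 0) (dir_deriv (\<gamma>' 0) \<Phi>) (\<gamma> 0)) \<le> 0"
    by (rule second_deriv_nonpos_if_midpoint_concave[OF d])
  moreover have "dir_deriv (2 *\<^sub>R (\<xi> ** B ** \<xi>)) \<Phi> A = 2 * dir_deriv (\<xi> ** B ** \<xi>) \<Phi> A"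
    using linear_scale[OF Ck_on_Suc_linear_dir_deriv[where k = 1, OF _ S]] \<Phi> in_S[of 0] d \<gamma>0
    by (simp add: numeral_2_eq_2)
  ultimately show ?thesis by (simp add: \<gamma>0 \<gamma>'0 \<Phi>_def B_def)
qed

section \<open>The maximum principle\<close>

lemma equation_differentiated_twice:
  fixes f :: "(real^'n) \<times> real \<Rightarrow> real" and F :: "real^'n^'n \<Rightarrow> real" and v :: "real^'n"
  defines "\<Phi> \<equiv> \<lambda>X. F (sym_part X)" and "a \<equiv> space_dir v"
  assumes f: "smooth_on f U" and U: "open U"
    and C2: "Ck_on 2 \<Phi> {X. posdef (sym_part X)}"
    and \<Omega>: "open \<Omega>" "x0 \<in> \<Omega>" "\<And>x. x \<in> \<Omega> \<Longrightarrow> (x, t0) \<in> U"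
    and posdef: "\<And>x. x \<in> \<Omega> \<Longrightarrow> posdef (space_hessian f (x, t0))"
    and equation: "\<And>x. x \<in> \<Omega> \<Longrightarrow> dir_deriv time_dir f (x, t0) = F (space_hessian f (x, t0))"
  shows "dir_derivs [time_dir, a, a] f (x0, t0)
     = dir_deriv (space_hessian (dir_derivs [a, a] f) (x0, t0)) \<Phi> (space_hessian f (x0, t0))
       + dir_deriv (space_hessian (dir_derivs [a] f) (x0, t0))
           (dir_deriv (space_hessian (dir_derivs [a] f) (x0, t0)) \<Phi>) (space_hessian f (x0, t0))"
proof -
  define S where "S = {X::real^'n^'n. posdef (sym_part X)}"
  have S: "open S" unfolding S_def by (rule open_posdef_sym_part)
  have C1: "Ck_on (Suc 1) \<Phi> S" using C2 by (simp add: S_def numeral_2_eq_2)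
  obtain d where d: "d > 0" and in_\<Omega>: "\<And>s. \<bar>s\<bar> < d \<Longrightarrow> x0 + s *\<^sub>R v \<in> \<Omega>"
    using open_contains_short_line[OF \<Omega>(1,2)] by blast
  define p0 where "p0 = (x0, t0)"
  have line: "p0 + s *\<^sub>R a = (x0 + s *\<^sub>R v, t0)" for s by (simp add: p0_def a_def space_dir_def)
  have in_U: "p0 + s *\<^sub>R a \<in> U" if "\<bar>s\<bar> < d" for s using \<Omega>(3)[OF in_\<Omega>[OF that]] line by simp
  define \<gamma> where "\<gamma> s = space_hessian f (p0 + s *\<^sub>R a)" for s
  define \<gamma>' where "\<gamma>' s = space_hessian (dir_derivs [a] f) (p0 + s *\<^sub>R a)" for s
  have \<gamma>: "(\<gamma> has_vector_derivative \<gamma>' s) (at s)" if "\<bar>s\<bar> < d" for s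
    unfolding \<gamma>_def[abs_def] \<gamma>'_def
    by (rule space_hessian_line_has_vector_derivative[OF f U in_U[OF that]])
  have \<gamma>': "(\<gamma>' has_vector_derivative space_hessian (dir_derivs [a, a] f) p0) (at 0)"
    using space_hessian_line_has_vector_derivative[OF smooth_on_dir_derivs[OF f] U, of p0 0 a "[a]"]
      in_U[of 0] d
    by (simp add: \<gamma>'_def[abs_def])
  have \<gamma>_sym: "transpose (\<gamma> s) = \<gamma> s" if "\<bar>s\<bar> < d" for s
    unfolding \<gamma>_def by (rule space_hessian_symmetric[OF f U in_U[OF that]])
  have in_S: "\<gamma> s \<in> S" if "\<bar>s\<bar> < d" for s
    using posdef[OF in_\<Omega>[OF that]] \<gamma>_sym[OF that] line by (simp add: S_def sym_part_id \<gamma>_def)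
  have eq: "dir_derivs [time_dir] f (p0 + s *\<^sub>R a) = \<Phi> (\<gamma> s)" if "\<bar>s\<bar> < d" for s
    using equation[OF in_\<Omega>[OF that]] \<gamma>_sym[OF that] line by (simp add: \<Phi>_def \<gamma>_def sym_part_id)
  have eq': "dir_derivs [a, time_dir] f (p0 + s *\<^sub>R a) = dir_deriv (\<gamma>' s) \<Phi> (\<gamma> s)"
    if s: "\<bar>s\<bar> < d" for s
  proof -
    have "((\<lambda>s. \<Phi> (\<gamma> s)) has_real_derivative dir_derivs [a, time_dir] f (p0 + s *\<^sub>R a)) (at s)"
    proof (rule has_field_derivative_transform_within_open[OF dir_derivs_line[OF f U in_U[OF s]]])
      show "dir_derivs [time_dir] f (p0 + r *\<^sub>R a) = \<Phi> (\<gamma> r)" if "r \<in> ball 0 d" for r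
        using eq that by simp
    qed (use s in auto)
    then show ?thesis using DERIV_unique dir_deriv_chain[OF C1 S in_S[OF s] \<gamma>[OF s]] by blast
  qed
  have "((\<lambda>s. dir_deriv (\<gamma>' s) \<Phi> (\<gamma> s)) has_real_derivative dir_derivs [a, a, time_dir] f p0) (at 0)"
  proof (rule has_field_derivative_transform_within_open[where S = "ball 0 d"])
    show "((\<lambda>s. dir_derivs [a, time_dir] f (p0 + s *\<^sub>R a)) has_real_derivative
        dir_derivs [a, a, time_dir] f p0) (at 0)"
      using dir_derivs_line[OF f U, of p0 0 a "[a, time_dir]"] in_U[of 0] d by simp
  qed (use d eq' in auto)
  then have "dir_derivs [a, a, time_dir] f p0
      = dir_deriv (space_hessian (dir_derivs [a, a] f) p0) \<Phi> (\<gamma> 0)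
        + dir_deriv (\<gamma>' 0) (dir_deriv (\<gamma>' 0) \<Phi>) (\<gamma> 0)"
    using DERIV_unique DERIV_dir_deriv_along_curve[OF C2[folded S_def] S d in_S \<gamma> \<gamma>'] by blast
  moreover have "dir_derivs [time_dir, a, a] f p0 = dir_derivs [a, a, time_dir] f p0"
    using in_U[of 0] d by (intro dir_derivs_perm[OF f U]) simp_all
  ultimately show ?thesis by (simp add: \<gamma>_def \<gamma>'_def p0_def)
qed

lemma DERIV2_quadratic_form_along_line:
  fixes f :: "(real^'n) \<times> real \<Rightarrow> real" and v z w :: "real^'n"
  defines "a \<equiv> space_dir v" and "b \<equiv> space_dir w" and "c \<equiv> space_dir z"
  assumes f: "smooth_on f U" and U: "open U" and d: "d > 0"
    and line: "\<And>s. \<bar>s\<bar> < d \<Longrightarrow> p + s *\<^sub>R b \<in> U"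
  obtains q' where
    "\<And>s. \<bar>s\<bar> < d \<Longrightarrow> ((\<lambda>s. (v + s *\<^sub>R z) \<bullet> (space_hessian f (p + s *\<^sub>R b) *v (v + s *\<^sub>R z)))
        has_real_derivative q' s) (at s)"
    "(q' has_real_derivative
        dir_derivs [b, b, a, a] f p + 4 * dir_derivs [b, a, c] f p + 2 * dir_derivs [c, c] f p) (at 0)"
proof -
  define g1 g2 g3 where "g1 s = dir_derivs [a, a] f (p + s *\<^sub>R b)"
    and "g2 s = dir_derivs [a, c] f (p + s *\<^sub>R b)" and "g3 s = dir_derivs [c, c] f (p + s *\<^sub>R b)"
    for s
  define g1' g2' g3' where "g1' s = dir_derivs [b, a, a] f (p + s *\<^sub>R b)"
    and "g2' s = dir_derivs [b, a, c] f (p + s *\<^sub>R b)" and "g3' s = dir_derivs [b, c, c] f (p + s *\<^sub>R b)"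
    for s
  have dg: "DERIV g1 s :> g1' s" "DERIV g2 s :> g2' s" "DERIV g3 s :> g3' s" if "\<bar>s\<bar> < d" for s
    unfolding g1_def g2_def g3_def g1'_def g2'_def g3'_def
    by (intro dir_derivs_line[OF f U line[OF that]])+
  have dg': "DERIV g1' 0 :> dir_derivs [b, b, a, a] f p" "DERIV g2' 0 :> dir_derivs [b, b, a, c] f p"
    "DERIV g3' 0 :> dir_derivs [b, b, c, c] f p"
    using dir_derivs_line[OF f U, of p 0 b "[b, a, a]"] dir_derivs_line[OF f U, of p 0 b "[b, a, c]"]
      dir_derivs_line[OF f U, of p 0 b "[b, c, c]"] line[of 0] d
    by (simp_all add: g1'_def[abs_def] g2'_def[abs_def] g3'_def[abs_def])
  define q' where "q' s = g1' s + 2 * g2 s + 2 * s * g2' s + 2 * s * g3 s + s\<^sup>2 * g3' s" for s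
  show ?thesis
  proof (rule that)
    fix s :: real assume s: "\<bar>s\<bar> < d"
    have "DERIV (\<lambda>s. g1 s + 2 * s * g2 s + s\<^sup>2 * g3 s) s :> q' s"
      unfolding q'_def using dg[OF s]
      by (auto intro!: derivative_eq_intros simp: power2_eq_square algebra_simps)
    then show "((\<lambda>s. (v + s *\<^sub>R z) \<bullet> (space_hessian f (p + s *\<^sub>R b) *v (v + s *\<^sub>R z)))
        has_real_derivative q' s) (at s)"
    proof (rule has_field_derivative_transform_within_open[where S = "ball 0 d"])
      fix r :: real assume "r \<in> ball 0 d"
      then show "g1 r + 2 * r * g2 r + r\<^sup>2 * g3 r
          = (v + r *\<^sub>R z) \<bullet> (space_hessian f (p + r *\<^sub>R b) *v (v + r *\<^sub>R z))"
        using quadratic_form_space_hessian_line[OF f U line, of r v r z]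
        by (simp add: g1_def g2_def g3_def a_def c_def)
    qed (use s in auto)
  next
    have "DERIV q' 0 :> dir_derivs [b, b, a, a] f p + 4 * g2' 0 + 2 * g3 0"
      unfolding q'_def[abs_def] using dg[of 0] dg' d
      by (auto intro!: derivative_eq_intros simp: power2_eq_square)
    then show "DERIV q' 0 :>
        dir_derivs [b, b, a, a] f p + 4 * dir_derivs [b, a, c] f p + 2 * dir_derivs [c, c] f p"
      by (simp add: g2'_def g3_def)
  qed
qed

text \<open>Second-order condition at a maximum of \<open>(x, v) \<mapsto> 2 v \<bullet> e - v \<bullet> D\<^sup>2u(x) v\<close>, taken along
  \<open>(x0 + s w, v0 - s B \<xi> w)\<close> where \<open>\<xi> = \<partial>\<^sub>v\<^sub>0 D\<^sup>2u\<close> and \<open>B = (D\<^sup>2u)\<inverse>\<close>.\<close>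
lemma second_variation_at_spatial_max:
  fixes f :: "(real^'n) \<times> real \<Rightarrow> real" and x0 v0 e w :: "real^'n" and t0 :: real
  defines "\<xi> \<equiv> space_hessian (dir_derivs [space_dir v0] f) (x0, t0)"
    and "V \<equiv> space_hessian (dir_derivs [space_dir v0, space_dir v0] f) (x0, t0)"
  assumes f: "smooth_on f U" and U: "open U"
    and \<Omega>: "open \<Omega>" "x0 \<in> \<Omega>" "\<And>x. x \<in> \<Omega> \<Longrightarrow> (x, t0) \<in> U"
    and R: "norm v0 < R"
    and max: "\<And>x v. x \<in> \<Omega> \<Longrightarrow> norm v \<le> R \<Longrightarrow>
        2 * (v \<bullet> e) - v \<bullet> (space_hessian f (x, t0) *v v)
          \<le> 2 * (v0 \<bullet> e) - v0 \<bullet> (space_hessian f (x0, t0) *v v0)"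
    and AB: "space_hessian f (x0, t0) ** B = mat 1" and B: "transpose B = B"
  shows "2 * ((\<xi> *v w) \<bullet> (B *v (\<xi> *v w))) \<le> w \<bullet> (V *v w)"
proof -
  define y where "y = \<xi> *v w"
  define z where "z = - (B *v y)"
  define a b c where "a = space_dir v0" and "b = space_dir w" and "c = space_dir z"
  define p0 where "p0 = (x0, t0)"
  have p0: "p0 \<in> U" using \<Omega> by (simp add: p0_def)
  obtain d1 where d1: "d1 > 0" and in_\<Omega>: "\<And>s. \<bar>s\<bar> < d1 \<Longrightarrow> x0 + s *\<^sub>R w \<in> \<Omega>"
    using open_contains_short_line[OF \<Omega>(1,2)] by blast
  obtain d2 where d2: "d2 > 0" and in_ball: "\<And>s. \<bar>s\<bar> < d2 \<Longrightarrow> v0 + s *\<^sub>R z \<in> ball 0 R"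
    using open_contains_short_line[of "ball 0 R" v0] R by auto
  define d where "d = min d1 d2"
  have d: "d > 0" using d1 d2 by (simp add: d_def)
  have line: "p0 + s *\<^sub>R b = (x0 + s *\<^sub>R w, t0)" for s by (simp add: p0_def b_def space_dir_def)
  have in_U: "p0 + s *\<^sub>R b \<in> U" if "\<bar>s\<bar> < d" for s
    using \<Omega>(3)[OF in_\<Omega>] line that by (simp add: d_def)
  obtain q' where q: "\<And>s. \<bar>s\<bar> < d \<Longrightarrow> ((\<lambda>s. (v0 + s *\<^sub>R z) \<bullet>
        (space_hessian f (p0 + s *\<^sub>R b) *v (v0 + s *\<^sub>R z))) has_real_derivative q' s) (at s)"
    and q': "(q' has_real_derivative
        dir_derivs [b, b, a, a] f p0 + 4 * dir_derivs [b, a, c] f p0 + 2 * dir_derivs [c, c] f p0) (at 0)"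
    using DERIV2_quadratic_form_along_line[OF f U d in_U[unfolded b_def]]
    unfolding a_def b_def c_def by blast
  define \<phi> where "\<phi> s = 2 * ((v0 + s *\<^sub>R z) \<bullet> e)
      - (v0 + s *\<^sub>R z) \<bullet> (space_hessian f (p0 + s *\<^sub>R b) *v (v0 + s *\<^sub>R z))" for s
  have "\<phi> s \<le> \<phi> 0" if "\<bar>s\<bar> < d" for s
    using max[OF in_\<Omega>, of s "v0 + s *\<^sub>R z"] in_ball[of s] that d line[of s]
    by (simp add: \<phi>_def d_def mem_ball_0 p0_def)
  moreover have "DERIV \<phi> s :> 2 * (z \<bullet> e) - q' s" if "\<bar>s\<bar> < d" for s
  proof -
    have "DERIV (\<lambda>s. 2 * (v0 \<bullet> e) + 2 * s * (z \<bullet> e)) s :> 2 * (z \<bullet> e)"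
      by (auto intro!: derivative_eq_intros)
    from DERIV_diff[OF this q[OF that]] show ?thesis
      by (simp add: \<phi>_def[abs_def] inner_add_left algebra_simps)
  qed
  moreover have "DERIV (\<lambda>s. 2 * (z \<bullet> e) - q' s) 0 :>
      - (dir_derivs [b, b, a, a] f p0 + 4 * dir_derivs [b, a, c] f p0 + 2 * dir_derivs [c, c] f p0)"
    using q' by (auto intro!: derivative_eq_intros)
  ultimately have "0 \<le> dir_derivs [b, b, a, a] f p0 + 4 * dir_derivs [b, a, c] f p0
      + 2 * dir_derivs [c, c] f p0"
    using second_deriv_nonpos_at_local_max[OF d] by force
  moreover have "dir_derivs [b, b, a, a] f p0 = w \<bullet> (V *v w)"
    using inner_space_hessian[OF smooth_on_dir_derivs[OF f, of "[a, a]"] U p0, of w w]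
      dir_derivs_append[of "[b, b]" "[a, a]" f]
    by (simp add: V_def a_def b_def p0_def)
  moreover have "dir_derivs [b, a, c] f p0 = - (y \<bullet> (B *v y))"
  proof -
    have "dir_derivs [b, a, c] f p0 = dir_derivs [c, b, a] f p0"
      by (rule dir_derivs_perm[OF f U p0]) (simp add: add_mset_commute)
    also have "\<dots> = z \<bullet> y"
      using inner_space_hessian[OF smooth_on_dir_derivs[OF f, of "[a]"] U p0, of z w]
        dir_derivs_append[of "[c, b]" "[a]" f]
      by (simp add: \<xi>_def y_def a_def b_def c_def p0_def)
    finally show ?thesis by (simp add: z_def inner_commute)
  qed
  moreover have "dir_derivs [c, c] f p0 = y \<bullet> (B *v y)"
  proof -
    have "space_hessian f p0 *v z = - y"
      using AB by (simp add: z_def p0_def matrix_vector_mul_assoc matrix_vector_mult_uminus)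
    then show ?thesis
      using inner_space_hessian[OF f U p0, of z z] by (simp add: c_def z_def inner_commute)
  qed
  ultimately show ?thesis by (simp add: y_def)
qed

lemma time_deriv_at_left_max:
  fixes f :: "(real^'n) \<times> real \<Rightarrow> real" and x0 v0 :: "real^'n"
  assumes f: "smooth_on f U" and U: "open U" and p0: "(x0, t0) \<in> U"
    and h0: "h0 > 0" and past: "\<And>h. 0 < h \<Longrightarrow> h < h0 \<Longrightarrow> (x0, t0 - h) \<in> U"
    and max_past: "\<And>h. 0 < h \<Longrightarrow> h < h0 \<Longrightarrow>
      v0 \<bullet> (space_hessian f (x0, t0) *v v0) + \<delta> * t0
        \<le> v0 \<bullet> (space_hessian f (x0, t0 - h) *v v0) + \<delta> * (t0 - h)"
  shows "dir_derivs [time_dir, space_dir v0, space_dir v0] f (x0, t0) \<le> - \<delta>"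
proof -
  define g where "g t = - dir_derivs [space_dir v0, space_dir v0] f ((x0, 0) + t *\<^sub>R time_dir) - \<delta> * t"
    for t
  have g: "g t = - (v0 \<bullet> (space_hessian f (x0, t) *v v0)) - \<delta> * t" if "(x0, t) \<in> U" for t
    using inner_space_hessian[OF f U that, of v0 v0] by (simp add: g_def time_dir_line)
  have "0 \<le> - dir_derivs [time_dir, space_dir v0, space_dir v0] f (x0, t0) - \<delta>"
  proof (rule DERIV_nonneg_at_left_max[OF _ h0])
    show "DERIV g t0 :> - dir_derivs [time_dir, space_dir v0, space_dir v0] f (x0, t0) - \<delta>"
      using dir_derivs_line[OF f U, of "(x0, 0)" t0 time_dir "[space_dir v0, space_dir v0]"] p0
      unfolding g_def[abs_def] by (auto intro!: derivative_eq_intros simp: time_dir_line)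
    show "g (t0 - h) \<le> g t0" if "0 < h" "h < h0" for h
      using max_past[OF that] g[OF past[OF that]] g[OF p0] by simp
  qed
  then show ?thesis by simp
qed

lemma interior_max_impossible:
  fixes f :: "(real^'n) \<times> real \<Rightarrow> real" and F :: "real^'n^'n \<Rightarrow> real"
    and e :: "real^'n" and \<delta> :: real
  defines "\<Psi> \<equiv> \<lambda>p v. 2 * (v \<bullet> e) - v \<bullet> (space_hessian f p *v v) - \<delta> * snd p"
  assumes f: "smooth_on f U" and U: "open U"
    and C2: "Ck_on 2 (\<lambda>X. F (sym_part X)) {X. posdef (sym_part X)}"
    and mono: "\<forall>A B. posdef A \<and> posdef B \<longrightarrow> F (A + B) \<ge> F A"
    and concave: "concave_on {A. posdef A} (\<lambda>A. - F (matrix_inv A))"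
    and \<Omega>: "open \<Omega>" "x0 \<in> \<Omega>" "\<And>x. x \<in> \<Omega> \<Longrightarrow> (x, t0) \<in> U"
    and posdef: "\<And>x. x \<in> \<Omega> \<Longrightarrow> posdef (space_hessian f (x, t0))"
    and equation: "\<And>x. x \<in> \<Omega> \<Longrightarrow> dir_deriv time_dir f (x, t0) = F (space_hessian f (x, t0))"
    and \<delta>: "\<delta> > 0" and h0: "h0 > 0" and past: "\<And>h. 0 < h \<Longrightarrow> h < h0 \<Longrightarrow> (x0, t0 - h) \<in> U"
    and R: "norm v0 < R"
    and max_past: "\<And>h. 0 < h \<Longrightarrow> h < h0 \<Longrightarrow> \<Psi> (x0, t0 - h) v0 \<le> \<Psi> (x0, t0) v0"
    and max_space: "\<And>x v. x \<in> \<Omega> \<Longrightarrow> norm v \<le> R \<Longrightarrow> \<Psi> (x, t0) v \<le> \<Psi> (x0, t0) v0"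
  shows False
proof -
  define \<Phi> where "\<Phi> = (\<lambda>X::real^'n^'n. F (sym_part X))"
  define S where "S = {X::real^'n^'n. posdef (sym_part X)}"
  have S: "open S" unfolding S_def by (rule open_posdef_sym_part)
  have \<Phi>: "Ck_on (Suc 1) \<Phi> S" using C2 by (simp add: \<Phi>_def S_def numeral_2_eq_2)
  define p0 where "p0 = (x0, t0)"
  have p0: "p0 \<in> U" using \<Omega> by (simp add: p0_def)
  define A B where "A = space_hessian f p0" and "B = matrix_inv A"
  have A: "posdef A" using posdef[OF \<Omega>(2)] by (simp add: A_def p0_def)
  have A_S: "A \<in> S" using A by (simp add: S_def posdef_def sym_part_id)
  have AB: "A ** B = mat 1" and BA: "B ** A = mat 1"
    using posdef_matrix_inv[OF A] by (simp_all add: B_def)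
  have B_sym: "transpose B = B" using posdef_inverse[OF A AB BA] by (simp add: posdef_def)
  define a where "a = space_dir v0"
  define \<xi> V where "\<xi> = space_hessian (dir_derivs [a] f) p0" and "V = space_hessian (dir_derivs [a, a] f) p0"
  have \<xi>_sym: "transpose \<xi> = \<xi>" and V_sym: "transpose V = V"
    unfolding \<xi>_def V_def by (intro space_hessian_symmetric[OF smooth_on_dir_derivs[OF f] U p0])+
  define D where "D = dir_derivs [time_dir, a, a] f p0"
  have "D \<le> - \<delta>"
    unfolding D_def a_def p0_def
  proof (rule time_deriv_at_left_max[OF f U p0[unfolded p0_def] h0 past])
    fix h :: real assume "0 < h" "h < h0"
    then show "v0 \<bullet> (space_hessian f (x0, t0) *v v0) + \<delta> * t0
        \<le> v0 \<bullet> (space_hessian f (x0, t0 - h) *v v0) + \<delta> * (t0 - h)"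
      using max_past[of h] by (simp add: \<Psi>_def)
  qed
  moreover have "D = dir_deriv V \<Phi> A + dir_deriv \<xi> (dir_deriv \<xi> \<Phi>) A"
    using equation_differentiated_twice[OF f U C2 \<Omega> posdef equation]
    by (simp add: D_def \<Phi>_def A_def V_def \<xi>_def a_def p0_def)
  moreover have "0 \<le> dir_deriv (V - 2 *\<^sub>R (\<xi> ** B ** \<xi>)) \<Phi> A"
    unfolding \<Phi>_def
  proof (rule dir_deriv_nonneg_if_mono[OF \<Phi>[unfolded \<Phi>_def] S A_S A mono])
    show "transpose (V - 2 *\<^sub>R (\<xi> ** B ** \<xi>)) = V - 2 *\<^sub>R (\<xi> ** B ** \<xi>)"
      using V_sym \<xi>_sym B_sym
      by (simp add: transpose_diff transpose_scalar matrix_transpose_mul matrix_mul_assoc)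
    fix w :: "real^'n"
    have "2 * ((\<xi> *v w) \<bullet> (B *v (\<xi> *v w))) \<le> w \<bullet> (V *v w)"
      unfolding \<xi>_def V_def a_def p0_def
    proof (rule second_variation_at_spatial_max[OF f U \<Omega> R _ AB[unfolded A_def p0_def] B_sym])
      fix x v :: "real^'n" assume "x \<in> \<Omega>" "norm v \<le> R"
      then show "2 * (v \<bullet> e) - v \<bullet> (space_hessian f (x, t0) *v v)
          \<le> 2 * (v0 \<bullet> e) - v0 \<bullet> (space_hessian f (x0, t0) *v v0)"
        using max_space[of x v] by (simp add: \<Psi>_def)
    qed
    then show "0 \<le> w \<bullet> ((V - 2 *\<^sub>R (\<xi> ** B ** \<xi>)) *v w)"
      using quadratic_form_symmetric_sandwich[OF \<xi>_sym, of w B]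
      by (simp add: matrix_vector_mult_diff_rdistrib scaleR_matrix_vector_assoc[symmetric]
          inner_diff_right)
  qed
  moreover have "dir_deriv (V - 2 *\<^sub>R (\<xi> ** B ** \<xi>)) \<Phi> A
      = dir_deriv V \<Phi> A - 2 * dir_deriv (\<xi> ** B ** \<xi>) \<Phi> A"
    using linear_diff[OF Ck_on_Suc_linear_dir_deriv[OF \<Phi> S A_S]]
      linear_scale[OF Ck_on_Suc_linear_dir_deriv[OF \<Phi> S A_S]]
    by simp
  moreover have "0 \<le> dir_deriv \<xi> (dir_deriv \<xi> \<Phi>) A + 2 * dir_deriv (\<xi> ** B ** \<xi>) \<Phi> A"
    using second_dir_deriv_bound_if_inverse_concave[OF C2 concave A \<xi>_sym] by (simp add: \<Phi>_def B_def)
  ultimately show False using \<delta> by linarith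
qed

context
  fixes \<Omega> :: "(real^'n) set" and U :: "((real^'n) \<times> real) set"
    and f :: "(real^'n) \<times> real \<Rightarrow> real" and F :: "real^'n^'n \<Rightarrow> real" and T \<epsilon> :: real
  assumes f: "smooth_on f U" and U: "open U" and cylinder: "closure \<Omega> \<times> {0..T} \<subseteq> U"
    and \<Omega>: "open \<Omega>" "bounded \<Omega>"
    and C2: "Ck_on 2 (\<lambda>X. F (sym_part X)) {X. posdef (sym_part X)}"
    and mono: "\<forall>A B. posdef A \<and> posdef B \<longrightarrow> F (A + B) \<ge> F A"
    and concave: "concave_on {A. posdef A} (\<lambda>A. - F (matrix_inv A))"
    and solution: "\<And>x t. x \<in> \<Omega> \<Longrightarrow> t \<in> {0<..T} \<Longrightarrow>
      posdef (space_hessian f (x, t)) \<and> dir_deriv time_dir f (x, t) = F (space_hessian f (x, t))"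
    and \<epsilon>: "\<epsilon> > 0"
    and parabolic_boundary: "\<And>x t y. x \<in> closure \<Omega> \<Longrightarrow> t \<in> {0..T} \<Longrightarrow> x \<in> frontier \<Omega> \<or> t = 0 \<Longrightarrow>
      \<epsilon> * (norm y)\<^sup>2 \<le> y \<bullet> (space_hessian f (x, t) *v y)"
begin

lemma cylinder_cases:
  assumes "x \<in> closure \<Omega>" "t \<in> {0..T}"
  obtains "x \<in> frontier \<Omega> \<or> t = 0" | "x \<in> \<Omega>" "t \<in> {0<..T}"
  using assms \<Omega>(1) closure_Un_frontier[of \<Omega>] by fastforce

lemma cylinder_coercive:
  obtains c where "c > 0"
    "\<And>p y. p \<in> closure \<Omega> \<times> {0..T} \<Longrightarrow> c * (norm y)\<^sup>2 \<le> y \<bullet> (space_hessian f p *v y)"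
proof (rule uniformly_coercive_on_compact)
  show "compact (closure \<Omega> \<times> {0..T})"
    using \<Omega>(2) by (intro compact_Times) (auto simp: compact_closure)
  show "continuous_on (closure \<Omega> \<times> {0..T}) (\<lambda>p. space_hessian f p $ i $ j)" for i j
    by (rule continuous_on_subset[OF continuous_on_space_hessian[OF f] cylinder])
  show "y \<bullet> (space_hessian f p *v y) > 0" if pK: "p \<in> closure \<Omega> \<times> {0..T}" and y: "y \<noteq> 0" for p y
  proof -
    obtain x t where p: "p = (x, t)" "x \<in> closure \<Omega>" "t \<in> {0..T}"
      using pK by (cases p) auto
    from p(2,3) show ?thesis
    proof (cases rule: cylinder_cases)
      case 1
      have "0 < \<epsilon> * (norm y)\<^sup>2" using \<epsilon> y by simp
      also have "\<dots> \<le> y \<bullet> (space_hessian f p *v y)" using parabolic_boundary p 1 by simp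
      finally show ?thesis .
    next
      case 2
      then show ?thesis using solution y by (auto simp: p posdef_def)
    qed
  qed
qed (use that in blast)

lemma penalized_max_exists:
  fixes e v :: "real^'n" and \<delta> :: real
  defines "\<Psi> \<equiv> \<lambda>p v. 2 * (v \<bullet> e) - v \<bullet> (space_hessian f p *v v) - \<delta> * snd p"
  assumes p: "p \<in> closure \<Omega> \<times> {0..T}"
  obtains x0 t0 v0 R where "x0 \<in> closure \<Omega>" "t0 \<in> {0..T}" "norm v0 < R" "\<Psi> p v \<le> \<Psi> (x0, t0) v0"
    "\<And>q w. q \<in> closure \<Omega> \<times> {0..T} \<Longrightarrow> norm w \<le> R \<Longrightarrow> \<Psi> q w \<le> \<Psi> (x0, t0) v0"
proof -
  define K where "K = closure \<Omega> \<times> {0..T}"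
  obtain c where c: "c > 0" "\<And>p y. p \<in> K \<Longrightarrow> c * (norm y)\<^sup>2 \<le> y \<bullet> (space_hessian f p *v y)"
    using cylinder_coercive unfolding K_def by blast
  define R where "R = max (norm v) (2 * norm e / c) + 1"
  have "2 * norm e / c < R" by (simp add: R_def)
  then have R: "norm v < R" "2 * norm e < c * R" using c(1) by (simp_all add: R_def field_simps)
  have R0: "0 < R" using R(1) norm_ge_zero[of v] by linarith
  have "compact (K \<times> cball (0::real^'n) R)"
    using \<Omega>(2) by (auto simp: K_def compact_closure intro!: compact_Times compact_cball)
  moreover have "K \<times> cball 0 R \<noteq> {}"
    using p R0 by (auto simp: K_def)
  moreover have "continuous_on (K \<times> cball 0 R) (\<lambda>z. \<Psi> (fst z) (snd z))"
  proof -
    have entries: "continuous_on K (\<lambda>p. space_hessian f p $ i $ j)" for i j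
      unfolding K_def by (rule continuous_on_subset[OF continuous_on_space_hessian[OF f] cylinder])
    show ?thesis unfolding \<Psi>_def
      by (intro continuous_on_diff[OF continuous_on_diff[OF _ continuous_on_quadratic_form[OF entries]]]
          continuous_intros)
  qed
  ultimately obtain z0 where z0: "z0 \<in> K \<times> cball 0 R"
    and max: "\<And>z. z \<in> K \<times> cball 0 R \<Longrightarrow> \<Psi> (fst z) (snd z) \<le> \<Psi> (fst z0) (snd z0)"
    using continuous_attains_sup[of "K \<times> cball 0 R" "\<lambda>z. \<Psi> (fst z) (snd z)"] by blast
  obtain x0 t0 v0 where z0_eq: "z0 = ((x0, t0), v0)" by (metis prod.collapse)
  have K0: "(x0, t0) \<in> K" and v0: "norm v0 \<le> R" using z0 by (auto simp: z0_eq)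
  have max': "\<Psi> q w \<le> \<Psi> (x0, t0) v0" if "q \<in> K" "norm w \<le> R" for q w
    using max[of "(q, w)"] that by (simp add: z0_eq)
  have v0_R: "norm v0 < R"
  proof (rule ccontr)
    assume "\<not> norm v0 < R"
    then have "norm v0 = R" using v0 by simp
    moreover have "\<Psi> (x0, t0) 0 \<le> \<Psi> (x0, t0) v0" using max'[OF K0, of 0] R0 by simp
    then have "c * (norm v0)\<^sup>2 \<le> 2 * (v0 \<bullet> e)" using c(2)[OF K0, of v0] by (simp add: \<Psi>_def)
    moreover have "v0 \<bullet> e \<le> norm v0 * norm e" by (rule norm_cauchy_schwarz)
    ultimately have "c * R * R \<le> 2 * norm e * R" by (simp add: power2_eq_square algebra_simps)
    then have "c * R \<le> 2 * norm e"
      using R0 by (rule mult_right_le_imp_le)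
    then show False using R(2) by simp
  qed
  show ?thesis
  proof (rule that)
    show "x0 \<in> closure \<Omega>" "t0 \<in> {0..T}" using K0 by (auto simp: K_def)
    show "\<Psi> p v \<le> \<Psi> (x0, t0) v0" using max'[of p v] p R(1) by (simp add: K_def)
    show "\<Psi> q w \<le> \<Psi> (x0, t0) v0" if "q \<in> closure \<Omega> \<times> {0..T}" "norm w \<le> R" for q w
      using max' that by (simp add: K_def)
  qed (rule v0_R)
qed

lemma penalized_max_bound:
  assumes \<delta>: "\<delta> > 0" and p: "p \<in> closure \<Omega> \<times> {0..T}"
  shows "2 * (v \<bullet> e) - v \<bullet> (space_hessian f p *v v) - \<delta> * snd p \<le> (norm e)\<^sup>2 / \<epsilon>"
proof -
  define \<Psi> where "\<Psi> = (\<lambda>p v. 2 * (v \<bullet> e) - v \<bullet> (space_hessian f p *v v) - \<delta> * snd p)"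
  obtain x0 t0 v0 R where x0: "x0 \<in> closure \<Omega>" and t0: "t0 \<in> {0..T}" and R: "norm v0 < R"
    and le: "\<Psi> p v \<le> \<Psi> (x0, t0) v0"
    and max: "\<And>q w. q \<in> closure \<Omega> \<times> {0..T} \<Longrightarrow> norm w \<le> R \<Longrightarrow> \<Psi> q w \<le> \<Psi> (x0, t0) v0"
    using penalized_max_exists[OF p, where e = e and \<delta> = \<delta> and v = v] unfolding \<Psi>_def by blast
  from x0 t0 show ?thesis
  proof (cases rule: cylinder_cases)
    case 1
    then have "2 * (v0 \<bullet> e) - v0 \<bullet> (space_hessian f (x0, t0) *v v0) \<le> (norm e)\<^sup>2 / \<epsilon>"
      using legendre_bound[OF \<epsilon>] parabolic_boundary[OF x0 t0] by blast
    moreover have "0 \<le> \<delta> * t0" using \<delta> t0 by simp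
    ultimately show ?thesis using le by (simp add: \<Psi>_def)
  next
    case 2
    have in_U: "(x, t) \<in> U" if "x \<in> \<Omega>" "t \<in> {0..T}" for x t
      using that closure_subset cylinder by blast
    have False
    proof (rule interior_max_impossible[OF f U C2 mono concave \<Omega>(1) \<open>x0 \<in> \<Omega>\<close> _ _ _ \<delta> _ _ R])
      show "(x, t0) \<in> U" if "x \<in> \<Omega>" for x using in_U that 2 by simp
      show "posdef (space_hessian f (x, t0))" "dir_deriv time_dir f (x, t0) = F (space_hessian f (x, t0))"
        if "x \<in> \<Omega>" for x using solution[OF that] 2 by auto
      show "0 < t0" using 2 by simp
      show "(x0, t0 - h) \<in> U" if "0 < h" "h < t0" for h
        using in_U that 2 by simp
      show "2 * (v0 \<bullet> e) - v0 \<bullet> (space_hessian f (x0, t0 - h) *v v0) - \<delta> * snd (x0, t0 - h)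
          \<le> 2 * (v0 \<bullet> e) - v0 \<bullet> (space_hessian f (x0, t0) *v v0) - \<delta> * snd (x0, t0)"
        if "0 < h" "h < t0" for h
        using max[of "(x0, t0 - h)" v0] that 2 R closure_subset by (auto simp: \<Psi>_def)
      show "2 * (w \<bullet> e) - w \<bullet> (space_hessian f (x, t0) *v w) - \<delta> * snd (x, t0)
          \<le> 2 * (v0 \<bullet> e) - v0 \<bullet> (space_hessian f (x0, t0) *v v0) - \<delta> * snd (x0, t0)"
        if "x \<in> \<Omega>" "norm w \<le> R" for x w
        using max[of "(x, t0)" w] that 2 closure_subset by (auto simp: \<Psi>_def)
    qed
    then show ?thesis ..
  qed
qed

lemma cylinder_lower_bound:
  assumes "p \<in> closure \<Omega> \<times> {0..T}"
  shows "\<epsilon> * (norm y)\<^sup>2 \<le> y \<bullet> (space_hessian f p *v y)"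
proof -
  have T: "0 \<le> snd p" "snd p \<le> T" using assms by auto
  define e where "e = \<epsilon> *\<^sub>R y"
  have "2 * (y \<bullet> e) - y \<bullet> (space_hessian f p *v y) \<le> (norm e)\<^sup>2 / \<epsilon> + \<delta>" if "\<delta> > 0" for \<delta>
  proof -
    have T1: "T + 1 > 0" using T by linarith
    have "\<delta> / (T + 1) * snd p \<le> \<delta> / (T + 1) * (T + 1)"
      using T T1 that by (intro mult_left_mono) auto
    also have "\<dots> = \<delta>" using T1 by simp
    finally show ?thesis
      using penalized_max_bound[where \<delta> = "\<delta> / (T + 1)" and v = y and e = e, OF _ assms] that T1
      by simp

  qed
  then have "2 * (y \<bullet> e) - y \<bullet> (space_hessian f p *v y) \<le> (norm e)\<^sup>2 / \<epsilon>"
    by (rule field_le_epsilon)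
  moreover have "y \<bullet> e = \<epsilon> * (norm y)\<^sup>2" by (simp add: e_def power2_norm_eq_inner)
  moreover have "(norm e)\<^sup>2 / \<epsilon> = \<epsilon> * (norm y)\<^sup>2"
    using \<epsilon> by (simp add: e_def power_mult_distrib power2_eq_square)
  ultimately show ?thesis by simp
qed

end

theorem theorem3p3:
  fixes \<Omega> :: "(real^'n) set" and u :: "real^'n \<Rightarrow> real \<Rightarrow> real"
    and F :: "real^'n^'n \<Rightarrow> real" and T \<epsilon> :: real
  assumes dom: "open \<Omega>" "connected \<Omega>" "bounded \<Omega>" "\<Omega> \<noteq> {}"
    and smooth: "\<exists>U. open U \<and> closure \<Omega> \<times> {0..T} \<subseteq> U \<and> smooth_on (\<lambda>(x, t). u x t) U"
    and F_C2: "Ck_on 2 (\<lambda>A. F (sym_part A)) {A. posdef (sym_part A)}"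
    and F_mono: "\<forall>A B. posdef A \<and> posdef B \<longrightarrow> F (A + B) \<ge> F A"
    and F_star_concave: "concave_on {A. posdef A} (\<lambda>A. - F (matrix_inv A))"
    and solution: "\<forall>x\<in>\<Omega>. \<forall>t\<in>{0<..T}.
        posdef (hess u x t) \<and> time_deriv u x t = F (hess u x t)"
    and eps: "\<epsilon> > 0"
    and init: "\<forall>x\<in>\<Omega>. mat_ge (hess u x 0) (\<epsilon> *\<^sub>R mat 1)"
    and bdry: "\<forall>x\<in>frontier \<Omega>. \<forall>t\<in>{0..T}. mat_ge (hess u x t) (\<epsilon> *\<^sub>R mat 1)"
  shows "\<forall>x\<in>\<Omega>. \<forall>t\<in>{0..T}. mat_ge (hess u x t) (\<epsilon> *\<^sub>R mat 1)"
proof -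
  obtain U where U: "open U" and cylinder: "closure \<Omega> \<times> {0..T} \<subseteq> U"
    and u: "smooth_on (\<lambda>(x, t). u x t) U"
    using smooth by blast
  have hess: "hess u x t = space_hessian (\<lambda>(x, t). u x t) (x, t)"
    if "x \<in> closure \<Omega>" "t \<in> {0..T}" for x t
    using hess_eq_space_hessian[OF u U] cylinder that by blast
  have "\<epsilon> * (norm y)\<^sup>2 \<le> y \<bullet> (hess u x t *v y)" if "x \<in> closure \<Omega>" "t \<in> {0..T}" for x t y
    unfolding hess[OF that]
  proof (rule cylinder_lower_bound[OF u U cylinder dom(1,3) F_C2 F_mono F_star_concave _ eps])
    fix x t assume x: "x \<in> \<Omega>" and t: "t \<in> {0<..T}"
    have x': "x \<in> closure \<Omega>" and t': "t \<in> {0..T}" using x t closure_subset by auto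
    then have xt: "(x, t) \<in> U" using cylinder by blast
    have "posdef (hess u x t) \<and> time_deriv u x t = F (hess u x t)" using solution x t by blast
    then show "posdef (space_hessian (\<lambda>(x, t). u x t) (x, t)) \<and>
        dir_deriv time_dir (\<lambda>(x, t). u x t) (x, t) = F (space_hessian (\<lambda>(x, t). u x t) (x, t))"
      using hess[OF x' t'] time_deriv_eq_dir_deriv[OF u U xt] by simp
  next
    fix x t and y :: "real^'n"
    assume "x \<in> closure \<Omega>" "t \<in> {0..T}" "x \<in> frontier \<Omega> \<or> t = 0"
    then have "mat_ge (hess u x t) (\<epsilon> *\<^sub>R mat 1)"
      using init bdry closure_Un_frontier[of \<Omega>] by (cases "x \<in> frontier \<Omega>") auto
    then show "\<epsilon> * (norm y)\<^sup>2 \<le> y \<bullet> (space_hessian (\<lambda>(x, t). u x t) (x, t) *v y)"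
      using hess \<open>x \<in> closure \<Omega>\<close> \<open>t \<in> {0..T}\<close> by (simp add: mat_ge_scaled_identity_iff)
  qed (use that in simp)
  then show ?thesis
    unfolding mat_ge_scaled_identity_iff using closure_subset[of \<Omega>] by blast
qed

end
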